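(* Let $f,g$ be real-valued measurable functions on $[0,1]$, integrable over $[0,x]$ for every $x<1$, such that $V_f,V_g\in\mathcal A_V$. Then $V_fV_g=V_{f*g}=0$ if and only if there exists $\alpha\in[0,1]$ such that $f=0$ a.e. on $[0,\alpha]$ and $g=0$ a.e. on $[0,1-\alpha]$.
   Context: $V$ is the Volterra operator on $L^2[0,1]$, $V\xi(x)=\int_0^x\xi(t)\,dt$, and $\mathcal A_V$ is the operator-norm closure in $\mathcal B(L^2[0,1])$ of the polynomials $p(V)$ with $p(0)=0$. For a measurable $f$ on $[0,1]$ integrable over $[0,x]$ for each $x<1$, $V_f$ is the operator $V_f\rho(x)=\int_0^xf(x-t)\rho(t)\,dt$; "$V_f\in\mathcal A_V$" means this defines a bounded operator on $L^2[0,1]$ belonging to $\mathcal A_V$. The convolution is $f*g(x)=\int_0^xf(x-t)g(t)\,dt$. *)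

theory Defs
  imports "HOL-Analysis.Analysis"
begin

definition L2 :: "(real \<Rightarrow> complex) \<Rightarrow> bool" where
  "L2 \<rho> \<longleftrightarrow> \<rho> \<in> borel_measurable (lebesgue_on {0..1}) \<and>
     integrable (lebesgue_on {0..1}) (\<lambda>x. (cmod (\<rho> x))\<^sup>2)"

definition L2norm :: "(real \<Rightarrow> complex) \<Rightarrow> real" where
  "L2norm \<rho> = sqrt (integral\<^sup>L (lebesgue_on {0..1}) (\<lambda>x. (cmod (\<rho> x))\<^sup>2))"

definition Vop :: "(real \<Rightarrow> real) \<Rightarrow> (real \<Rightarrow> complex) \<Rightarrow> real \<Rightarrow> complex" where
  "Vop f \<rho> x = integral\<^sup>L (lebesgue_on {0..x}) (\<lambda>t. complex_of_real (f (x - t)) * \<rho> t)"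

definition volterra :: "(real \<Rightarrow> complex) \<Rightarrow> real \<Rightarrow> complex" where
  "volterra = Vop (\<lambda>_. 1)"

text \<open>p(V) for p(z) = sum_{k=1}^n c_k z^k (so p(0) = 0).\<close>
definition polyV :: "(nat \<Rightarrow> complex) \<Rightarrow> nat \<Rightarrow> (real \<Rightarrow> complex) \<Rightarrow> real \<Rightarrow> complex" where
  "polyV c n \<rho> = (\<lambda>x. \<Sum>k\<in>{1..n}. c k * (volterra ^^ k) \<rho> x)"

text \<open>V_f defines a bounded operator on L2[0,1] lying in the operator-norm closure A_V
  of the polynomials p(V) with p(0)=0.\<close>
definition in_AV :: "(real \<Rightarrow> real) \<Rightarrow> bool" where
  "in_AV f \<longleftrightarrow>
     (\<forall>\<rho>. L2 \<rho> \<longrightarrow> (AE x in lebesgue_on {0..1}.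
        integrable (lebesgue_on {0..x}) (\<lambda>t. complex_of_real (f (x - t)) * \<rho> t))) \<and>
     (\<forall>\<epsilon>>0. \<exists>c n. \<forall>\<rho>. L2 \<rho> \<longrightarrow>
        L2 (\<lambda>x. Vop f \<rho> x - polyV c n \<rho> x) \<and>
        L2norm (\<lambda>x. Vop f \<rho> x - polyV c n \<rho> x) \<le> \<epsilon> * L2norm \<rho>)"

definition op_zero :: "((real \<Rightarrow> complex) \<Rightarrow> real \<Rightarrow> complex) \<Rightarrow> bool" where
  "op_zero T \<longleftrightarrow> (\<forall>\<rho>. L2 \<rho> \<longrightarrow> (AE x in lebesgue_on {0..1}. T \<rho> x = 0))"

definition conv :: "(real \<Rightarrow> real) \<Rightarrow> (real \<Rightarrow> real) \<Rightarrow> real \<Rightarrow> real" where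
  "conv f g x = integral\<^sup>L (lebesgue_on {0..x}) (\<lambda>t. f (x - t) * g t)"

end

theory Submission
  imports Defs "HOL-Real_Asymp.Real_Asymp"
begin

text \<open>Sufficiency is a support computation. For necessity, testing \<open>V\<^sub>f V\<^sub>g\<close> on the constant
  function 1 gives \<open>f * G = 0\<close>, \<open>G\<close> the primitive of \<open>g\<close>; convolving once more with 1 turns this into
  \<open>F * G = 0\<close> on \<open>[0, T]\<close> for the continuous primitives \<open>F\<close>, \<open>G\<close> and every \<open>T < 1\<close>, and Titchmarsh's
  convolution theorem bounds the initial vanishing intervals of \<open>F\<close> and \<open>G\<close> from below.

  Titchmarsh's theorem for continuous functions is proved by real-variable means. If \<open>h * h = 0\<close> on
  \<open>[0, 2T]\<close>, the exponential moments of \<open>h\<close> over \<open>[0, T/2]\<close>, weighted by \<open>exp (n (T/2 - x))\<close>,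
  stay bounded in \<open>n\<close>, which forces \<open>h = 0\<close> on \<open>[0, T/2]\<close>. For \<open>F * G = 0\<close> one shows inductively that all the convolutions
  \<open>(x\<^sup>k F) * G\<close> vanish near 0 by reducing to the symmetric case, so that all moments of
  \<open>y \<mapsto> F y G (s - y)\<close> vanish and this product is zero.\<close>

section \<open>Integrals over intervals\<close>

lemma integral_lebesgue_on_Icc:
  "integral\<^sup>L (lebesgue_on {a..b}) (\<phi>::real \<Rightarrow> real) = (\<integral>x. indicator {a..b} x * \<phi> x \<partial>lebesgue)"
  by (subst integral_restrict_space) auto

lemma integral_lebesgue_on_Icc_lborel:
  fixes \<phi> :: "real \<Rightarrow> real"
  assumes "\<phi> \<in> borel_measurable borel"
  shows "integral\<^sup>L (lebesgue_on {a..b}) \<phi> = (\<integral>x. indicator {a..b} x * \<phi> x \<partial>lborel)"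
  unfolding integral_lebesgue_on_Icc using assms by (intro integral_completion) auto

lemma integral_lebesgue_on_affine:
  fixes \<phi> :: "real \<Rightarrow> real"
  assumes "c \<noteq> 0"
  shows "integral\<^sup>L (lebesgue_on {a..b}) \<phi> =
    \<bar>c\<bar> * (\<integral>x. indicator {a..b} (t + c * x) * \<phi> (t + c * x) \<partial>lebesgue)"
  unfolding integral_lebesgue_on_Icc
  using lebesgue_integral_real_affine[OF assms, of "\<lambda>x. indicator {a..b} x * \<phi> x" t] by simp

lemma integral_lebesgue_on_reflect:
  fixes \<phi> :: "real \<Rightarrow> real"
  shows "integral\<^sup>L (lebesgue_on {0..s}) \<phi> = integral\<^sup>L (lebesgue_on {0..s}) (\<lambda>x. \<phi> (s - x))"
  by (subst integral_lebesgue_on_affine[of "-1" _ _ _ s])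
    (simp_all add: integral_lebesgue_on_Icc, auto intro!: Bochner_Integration.integral_cong simp: indicator_def)

lemma integral_lebesgue_on_shift:
  fixes \<phi> :: "real \<Rightarrow> real"
  shows "integral\<^sup>L (lebesgue_on {a..b}) \<phi> = integral\<^sup>L (lebesgue_on {a-d..b-d}) (\<lambda>x. \<phi> (x + d))"
  by (subst integral_lebesgue_on_affine[of 1 _ _ _ d])
    (simp_all add: integral_lebesgue_on_Icc, auto intro!: Bochner_Integration.integral_cong simp: indicator_def add.commute)

lemma integral_lebesgue_on_scale:
  fixes \<phi> :: "real \<Rightarrow> real"
  assumes "s > 0"
  shows "integral\<^sup>L (lebesgue_on {0..s}) \<phi> = s * integral\<^sup>L (lebesgue_on {0..1}) (\<lambda>w. \<phi> (s * w))"
  using assms by (subst integral_lebesgue_on_affine[of s _ _ _ 0])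
    (simp_all add: integral_lebesgue_on_Icc, auto intro!: Bochner_Integration.integral_cong arg_cong2[where f="(*)"]
      simp: indicator_def zero_le_mult_iff mult_le_cancel_left1)

lemma integral_lebesgue_on_indicator:
  fixes \<phi> :: "real \<Rightarrow> real"
  assumes "a \<le> c" "d \<le> b"
  shows "integral\<^sup>L (lebesgue_on {a..b}) (\<lambda>x. indicator {c..d} x * \<phi> x) = integral\<^sup>L (lebesgue_on {c..d}) \<phi>"
  unfolding integral_lebesgue_on_Icc
  by (intro Bochner_Integration.integral_cong) (use assms in \<open>auto simp: indicator_def\<close>)

lemma AE_lebesgue_on_neq: "AE x in lebesgue_on {a..b}. x \<noteq> (u::real) \<and> x \<in> {a..b}"
proof -
  have "AE x in lebesgue. x \<noteq> u" by (rule AE_completion[OF AE_lborel_singleton])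
  then show ?thesis by (subst AE_restrict_space_iff) (auto elim: eventually_mono)
qed

lemma integral_lebesgue_on_singleton: "integral\<^sup>L (lebesgue_on {a..a}) (\<phi>::real \<Rightarrow> real) = 0"
  by (rule integral_eq_zero_AE) (use AE_lebesgue_on_neq[of a a a] in auto)

lemma integral_lebesgue_on_eq_0:
  "(\<And>x. x \<in> {a..b} \<Longrightarrow> \<phi> x = 0) \<Longrightarrow> integral\<^sup>L (lebesgue_on {a..b}) (\<phi>::real \<Rightarrow> real) = 0"
  by (rule trans[OF Bochner_Integration.integral_cong[where g="\<lambda>_. 0"]]) auto

lemma continuous_on_compose_UNIV:
  "continuous_on UNIV F \<Longrightarrow> continuous_on S h \<Longrightarrow> continuous_on S (\<lambda>x. F (h x))"
  by (rule continuous_on_compose2[OF _ _ subset_UNIV])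

lemma integrable_lebesgue_on_continuous:
  "continuous_on UNIV (h::real \<Rightarrow> real) \<Longrightarrow> integrable (lebesgue_on {a..b}) h"
  by (metis continuous_imp_integrable_real continuous_on_subset subset_UNIV)

lemma borel_measurable_lebesgue_on_continuous:
  "continuous_on UNIV (h::real \<Rightarrow> real) \<Longrightarrow> h \<in> borel_measurable (lebesgue_on {a..b})"
  by (rule borel_measurable_integrable[OF integrable_lebesgue_on_continuous])

lemma integrable_on_Icc_continuous: "continuous_on UNIV (h::real \<Rightarrow> real) \<Longrightarrow> h integrable_on {a..b}"
  by (metis integrable_continuous_real continuous_on_subset subset_UNIV)

lemma integral_lebesgue_on_continuous:
  "continuous_on UNIV (\<phi>::real \<Rightarrow> real) \<Longrightarrow> integral\<^sup>L (lebesgue_on {a..b}) \<phi> = integral {a..b} \<phi>"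
  by (rule lebesgue_integral_eq_integral[OF integrable_lebesgue_on_continuous]) auto

lemma abs_integral_le_integral_abs:
  fixes \<phi> h :: "real \<Rightarrow> real"
  assumes "continuous_on UNIV \<phi>" "continuous_on UNIV h" "B \<ge> 0"
    and "\<And>x. x \<in> {a..b} \<Longrightarrow> \<bar>\<phi> x\<bar> \<le> B * \<bar>h x\<bar>"
  shows "\<bar>integral {a..b} \<phi>\<bar> \<le> B * integral {a..b} (\<lambda>x. \<bar>h x\<bar>)"
proof -
  have "norm (integral {a..b} \<phi>) \<le> integral {a..b} (\<lambda>x. B * \<bar>h x\<bar>)"
    by (rule integral_norm_bound_integral)
       (use assms in \<open>auto intro!: integrable_on_Icc_continuous continuous_intros\<close>)
  then show ?thesis by simp
qed

lemma integral_abs_mono_interval: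
  fixes h :: "real \<Rightarrow> real"
  assumes "continuous_on UNIV h" "0 \<le> a" "b \<le> c"
  shows "integral {a..b} (\<lambda>x. \<bar>h x\<bar>) \<le> integral {0..c} (\<lambda>x. \<bar>h x\<bar>)"
proof (cases "a \<le> b")
  case True
  show ?thesis
    by (rule integral_subset_le) (use assms True in \<open>auto intro!: integrable_on_Icc_continuous continuous_intros\<close>)
next
  case False
  have "integral {0..c} (\<lambda>x. \<bar>h x\<bar>) \<ge> 0"
    by (rule integral_nonneg) (use assms in \<open>auto intro!: integrable_on_Icc_continuous continuous_intros\<close>)
  with False show ?thesis by simp
qed

lemma borel_measurable_integral_lborel_Icc:
  fixes k :: "real \<Rightarrow> real \<Rightarrow> real" and l u :: "real \<Rightarrow> real"
  assumes k: "(\<lambda>p. k (fst p) (snd p)) \<in> borel_measurable borel"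
    and l: "continuous_on UNIV l" and u: "continuous_on UNIV u"
  shows "(\<lambda>s. \<integral>t. indicator {l s..u s} t * k s t \<partial>lborel) \<in> borel_measurable borel"
proof -
  have "closed {p. l (fst p) \<le> snd p \<and> snd p \<le> u (fst p)}"
    by (intro closed_Collect_conj closed_Collect_le continuous_intros
        continuous_on_compose_UNIV[OF l] continuous_on_compose_UNIV[OF u])
  then have "(\<lambda>p. indicator {p. l (fst p) \<le> snd p \<and> snd p \<le> u (fst p)} p * k (fst p) (snd p))
      \<in> borel_measurable (lborel \<Otimes>\<^sub>M lborel)"
    using k by (simp add: lborel_prod measurable_lborel1 borel_closed)
  then have "(\<lambda>s. \<integral>t. indicator {p. l (fst p) \<le> snd p \<and> snd p \<le> u (fst p)} (s, t) * k s t \<partial>lborel)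
      \<in> borel_measurable lborel"
    by (intro lborel.borel_measurable_lebesgue_integral) (simp add: case_prod_unfold)
  then show ?thesis by (simp add: measurable_lborel1 indicator_def)
qed

lemma integral_triangle_swap:
  fixes k :: "real \<Rightarrow> real \<Rightarrow> real"
  assumes meas: "(\<lambda>(s,t). k s t) \<in> borel_measurable borel"
    and int: "integrable lborel (\<lambda>(s,t). indicator {(s,t). 0 \<le> t \<and> t \<le> s \<and> s \<le> c} (s,t) * k s t)"
  shows "integral\<^sup>L (lebesgue_on {0..c}) (\<lambda>s. integral\<^sup>L (lebesgue_on {0..s}) (\<lambda>t. k s t))
       = integral\<^sup>L (lebesgue_on {0..c}) (\<lambda>t. integral\<^sup>L (lebesgue_on {t..c}) (\<lambda>s. k s t))"
proof -
  define D where "D = {(s,t). 0 \<le> t \<and> t \<le> s \<and> s \<le> (c::real)}"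
  have mk: "(\<lambda>p. k (fst p) (snd p)) \<in> borel_measurable borel"
    using meas by (simp add: case_prod_unfold)
  have swap: "(\<lambda>p::real \<times> real. (snd p, fst p)) \<in> borel_measurable borel"
    by (intro borel_measurable_continuous_onI continuous_intros)
  have mk': "(\<lambda>p. k (snd p) (fst p)) \<in> borel_measurable borel"
    using measurable_compose[OF swap meas] by (simp add: case_prod_unfold)
  have ks: "k s \<in> borel_measurable borel" for s
    using measurable_Pair2[OF mk[unfolded borel_prod[symmetric]], of s] by simp
  have kt: "(\<lambda>s. k s t) \<in> borel_measurable borel" for t
    using measurable_Pair1[OF mk[unfolded borel_prod[symmetric]], of t] by simp
  have inner_s: "(\<lambda>s. \<integral>t. indicator {0..s} t * k s t \<partial>lborel) \<in> borel_measurable borel"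
    by (rule borel_measurable_integral_lborel_Icc[OF mk, where l="\<lambda>_. 0" and u="\<lambda>s. s"])
      (auto intro: continuous_intros)
  have inner_t: "(\<lambda>t. \<integral>s. indicator {t..c} s * k s t \<partial>lborel) \<in> borel_measurable borel"
    by (rule borel_measurable_integral_lborel_Icc[where k="\<lambda>t s. k s t" and l="\<lambda>t. t" and u="\<lambda>_. c"])
      (auto intro: continuous_intros mk')
  have ind1: "indicator D (s,t) = (indicator {0..c} s * indicator {0..s} t :: real)" for s t
    by (auto simp: D_def indicator_def)
  have ind2: "indicator D (s,t) = (indicator {0..c} t * indicator {t..c} s :: real)" for s t
    by (auto simp: D_def indicator_def)
  have "integral\<^sup>L (lebesgue_on {0..c}) (\<lambda>s. integral\<^sup>L (lebesgue_on {0..s}) (\<lambda>t. k s t))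
     = (\<integral>s. indicator {0..c} s * (\<integral>t. indicator {0..s} t * k s t \<partial>lborel) \<partial>lborel)"
    using ks inner_s by (simp add: integral_lebesgue_on_Icc_lborel)
  also have "\<dots> = (\<integral>s. \<integral>t. indicator D (s,t) * k s t \<partial>lborel \<partial>lborel)"
    by (simp add: ind1 mult.assoc)
  also have "\<dots> = (\<integral>t. \<integral>s. indicator D (s,t) * k s t \<partial>lborel \<partial>lborel)"
    using lborel_pair.Fubini_integral[of "\<lambda>s t. indicator D (s,t) * k s t"] int
    by (simp add: D_def case_prod_unfold lborel_prod)
  also have "\<dots> = (\<integral>t. indicator {0..c} t * (\<integral>s. indicator {t..c} s * k s t \<partial>lborel) \<partial>lborel)"
    by (simp add: ind2 mult.assoc)
  also have "\<dots> = integral\<^sup>L (lebesgue_on {0..c}) (\<lambda>t. integral\<^sup>L (lebesgue_on {t..c}) (\<lambda>s. k s t))"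
    using kt inner_t by (simp add: integral_lebesgue_on_Icc_lborel)
  finally show ?thesis .
qed

section \<open>Convolution of continuous functions\<close>

lemma conv_neg_eq_0: "s < 0 \<Longrightarrow> conv F G s = 0"
  unfolding conv_def by (rule Bochner_Integration.integral_empty) simp

lemma conv_at_0: "conv F G 0 = 0"
  unfolding conv_def by (rule integral_lebesgue_on_singleton)

lemma conv_cong:
  assumes "\<And>x. x \<in> {0..s} \<Longrightarrow> F x = F' x" "\<And>x. x \<in> {0..s} \<Longrightarrow> G x = G' x"
  shows "conv F G s = conv F' G' s"
  unfolding conv_def using assms by (intro Bochner_Integration.integral_cong) auto

lemma conv_commute: "conv F G = conv G F"
proof
  fix s
  show "conv F G s = conv G F s"
    unfolding conv_def by (subst integral_lebesgue_on_reflect) (simp add: mult.commute)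
qed

lemma conv_eq_0_if_vanishing:
  assumes "\<And>x. x \<in> {0..a} \<Longrightarrow> F x = 0" "\<And>x. x \<in> {0..b} \<Longrightarrow> G x = 0" "s \<le> a + b"
  shows "conv F G s = 0"
  unfolding conv_def
proof (rule integral_lebesgue_on_eq_0)
  fix x assume "x \<in> {0..s}"
  with assms show "F (s - x) * G x = 0" by (cases "x \<le> b") auto
qed

lemma conv_cmult_right: "conv F (\<lambda>x. c * G x) s = c * conv F G s"
  unfolding conv_def by (simp add: algebra_simps)

lemma integrable_conv_kernel:
  fixes F G :: "real \<Rightarrow> real"
  assumes "continuous_on UNIV F" "continuous_on UNIV G"
  shows "integrable (lebesgue_on {a..b}) (\<lambda>x. F (s - x) * G x)"
  by (intro integrable_lebesgue_on_continuous continuous_intros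
      continuous_on_compose_UNIV[OF assms(1)] assms(2))

lemma conv_sum_right:
  fixes F :: "real \<Rightarrow> real" and H :: "'i \<Rightarrow> real \<Rightarrow> real"
  assumes F: "continuous_on UNIV F" and H: "\<And>i. i \<in> I \<Longrightarrow> continuous_on UNIV (H i)"
  shows "conv F (\<lambda>x. \<Sum>i\<in>I. H i x) s = (\<Sum>i\<in>I. conv F (H i) s)"
  unfolding conv_def using integrable_conv_kernel[OF F H]
  by (cases "finite I") (simp_all add: sum_distrib_left)

lemma conv_eq_integral:
  fixes F G :: "real \<Rightarrow> real"
  assumes F: "continuous_on UNIV F" and G: "continuous_on UNIV G"
  shows "conv F G s = integral {0..s} (\<lambda>x. F (s - x) * G x)"
  unfolding conv_def
  by (rule integral_lebesgue_on_continuous) (intro continuous_intros continuous_on_compose_UNIV[OF F] G)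

lemma continuous_on_conv:
  assumes F: "continuous_on UNIV F" and G: "continuous_on UNIV G"
  shows "continuous_on UNIV (conv F G)"
proof -
  define m where "m s = max s 0" for s :: real
  define \<Phi> where "\<Phi> s = m s * integral {0..1} (\<lambda>w. F (m s - m s * w) * G (m s * w))" for s
  have cm: "continuous_on UNIV m" unfolding m_def by (intro continuous_intros)
  have "continuous_on UNIV (\<lambda>s. integral (cbox 0 1) (\<lambda>w. F (m s - m s * w) * G (m s * w)))"
    by (rule integral_continuous_on_param) (simp add: case_prod_unfold,
        intro continuous_intros continuous_on_compose_UNIV[OF F] continuous_on_compose_UNIV[OF G]
          continuous_on_compose_UNIV[OF cm])
  then have "continuous_on UNIV \<Phi>" unfolding \<Phi>_def by (intro continuous_intros cm) auto
  moreover have "conv F G s = \<Phi> s" for s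
  proof (cases "s > 0")
    case True
    have "conv F G s = s * integral\<^sup>L (lebesgue_on {0..1}) (\<lambda>w. F (s - s * w) * G (s * w))"
      unfolding conv_def by (subst integral_lebesgue_on_scale[OF True]) simp
    also have "\<dots> = s * integral {0..1} (\<lambda>w. F (s - s * w) * G (s * w))"
      by (subst integral_lebesgue_on_continuous) (auto intro!: continuous_intros
          continuous_on_compose_UNIV[OF F] continuous_on_compose_UNIV[OF G])
    finally show ?thesis using True by (simp add: \<Phi>_def m_def)
  next
    case False
    then show ?thesis by (cases "s = 0") (auto simp: \<Phi>_def m_def conv_neg_eq_0 conv_at_0)
  qed
  ultimately show ?thesis by (simp add: fun_eq_iff)
qed

lemma integral_triangle_swap_continuous:
  fixes k :: "real \<Rightarrow> real \<Rightarrow> real"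
  assumes cont: "continuous_on UNIV (\<lambda>p. k (fst p) (snd p))"
  shows "integral\<^sup>L (lebesgue_on {0..c}) (\<lambda>s. integral\<^sup>L (lebesgue_on {0..s}) (\<lambda>t. k s t))
       = integral\<^sup>L (lebesgue_on {0..c}) (\<lambda>t. integral\<^sup>L (lebesgue_on {t..c}) (\<lambda>s. k s t))"
proof (rule integral_triangle_swap)
  show "(\<lambda>(s,t). k s t) \<in> borel_measurable borel"
    using cont by (simp add: case_prod_unfold borel_measurable_continuous_onI)
  define D where "D = {(s,t). 0 \<le> t \<and> t \<le> s \<and> s \<le> c}"
  have "closed D" unfolding D_def
    by (auto intro!: closed_Collect_conj closed_Collect_le continuous_intros simp: case_prod_unfold)
  moreover have "bounded D"
    by (rule bounded_subset[OF bounded_cbox[of "(0,0)" "(c,c)"]])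
       (auto simp: D_def cbox_def Basis_prod_def inner_prod_def)
  ultimately have "compact D" by (simp add: compact_eq_bounded_closed)
  from borel_integrable_compact[OF this continuous_on_subset[OF cont subset_UNIV]]
  show "integrable lborel (\<lambda>(s,t). indicator {(s,t). 0 \<le> t \<and> t \<le> s \<and> s \<le> c} (s,t) * k s t)"
    by (simp add: D_def case_prod_unfold)
qed

lemma conv_conv_swap_right:
  fixes F G H :: "real \<Rightarrow> real"
  assumes F: "continuous_on UNIV F" and G: "continuous_on UNIV G" and H: "continuous_on UNIV H"
  shows "conv (conv F G) H s = conv (conv F H) G s"
proof (cases "s < 0")
  case True then show ?thesis by (simp add: conv_neg_eq_0)
next
  case False
  have "conv (conv F G) H s = integral\<^sup>L (lebesgue_on {0..s}) (\<lambda>u. conv F G u * H (s - u))"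
    unfolding conv_def[of "conv F G"] by (subst integral_lebesgue_on_reflect) simp
  also have "\<dots> = integral\<^sup>L (lebesgue_on {0..s})
      (\<lambda>u. integral\<^sup>L (lebesgue_on {0..u}) (\<lambda>t. F (u - t) * G t * H (s - u)))"
    unfolding conv_def by simp
  also have "\<dots> = integral\<^sup>L (lebesgue_on {0..s})
      (\<lambda>t. integral\<^sup>L (lebesgue_on {t..s}) (\<lambda>u. F (u - t) * G t * H (s - u)))"
    by (rule integral_triangle_swap_continuous) (intro continuous_intros
        continuous_on_compose_UNIV[OF F] continuous_on_compose_UNIV[OF G] continuous_on_compose_UNIV[OF H])
  also have "\<dots> = integral\<^sup>L (lebesgue_on {0..s}) (\<lambda>t. conv F H (s - t) * G t)"
  proof (intro Bochner_Integration.integral_cong refl)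
    fix t
    have "integral\<^sup>L (lebesgue_on {t..s}) (\<lambda>u. F (u - t) * G t * H (s - u))
        = integral\<^sup>L (lebesgue_on {0..s-t}) (\<lambda>x. F x * H (s - t - x) * G t)"
      by (subst integral_lebesgue_on_shift[of _ _ _ t]) (simp add: algebra_simps)
    also have "\<dots> = conv F H (s - t) * G t"
      by (subst conv_commute) (simp add: conv_def mult.commute)
    finally show "integral\<^sup>L (lebesgue_on {t..s}) (\<lambda>u. F (u - t) * G t * H (s - u)) = conv F H (s - t) * G t" .
  qed
  also have "\<dots> = conv (conv F H) G s" unfolding conv_def[of "conv F H"] ..
  finally show ?thesis .
qed

lemma conv_assoc:
  fixes F G H :: "real \<Rightarrow> real"
  assumes F: "continuous_on UNIV F" and G: "continuous_on UNIV G" and H: "continuous_on UNIV H"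
  shows "conv F (conv G H) = conv (conv F G) H"
proof
  fix s
  have "conv F (conv G H) s = conv (conv G H) F s" by (simp only: conv_commute)
  also have "\<dots> = conv (conv G F) H s" by (rule conv_conv_swap_right[OF G H F])
  finally show "conv F (conv G H) s = conv (conv F G) H s" by (simp only: conv_commute)
qed

lemma conv_shift:
  fixes F G :: "real \<Rightarrow> real"
  assumes "a \<ge> 0" "b \<ge> 0" "s \<ge> 0"
    and F0: "\<And>x. 0 \<le> x \<Longrightarrow> x < a \<Longrightarrow> F x = 0" and G0: "\<And>x. 0 \<le> x \<Longrightarrow> x < b \<Longrightarrow> G x = 0"
  shows "conv F G (s + a + b) = conv (\<lambda>x. F (x + a)) (\<lambda>x. G (x + b)) s"
proof -
  have "conv F G (s + a + b) =
      integral\<^sup>L (lebesgue_on {0..s+a+b}) (\<lambda>x. indicator {b..s+b} x * (F (s + a + b - x) * G x))"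
    unfolding conv_def
  proof (intro Bochner_Integration.integral_cong refl)
    fix x assume "x \<in> space (lebesgue_on {0..s + a + b})"
    then have "0 \<le> x" "x \<le> s + a + b" by auto
    then show "F (s + a + b - x) * G x = indicator {b..s+b} x * (F (s + a + b - x) * G x)"
      using F0[of "s + a + b - x"] G0[of x] by (cases "x \<in> {b..s+b}") (auto simp: indicator_def)
  qed
  also have "\<dots> = integral\<^sup>L (lebesgue_on {b..s+b}) (\<lambda>x. F (s + a + b - x) * G x)"
    by (rule integral_lebesgue_on_indicator) (use assms in auto)
  also have "\<dots> = conv (\<lambda>x. F (x + a)) (\<lambda>x. G (x + b)) s"
    unfolding conv_def by (subst integral_lebesgue_on_shift[of _ _ _ b]) (simp add: algebra_simps)
  finally show ?thesis .
qed

lemma conv_power_weight: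
  fixes F G :: "real \<Rightarrow> real"
  assumes F: "continuous_on UNIV F" and G: "continuous_on UNIV G"
  shows "conv F (\<lambda>y. y^k * G y) x =
    (\<Sum>i\<le>k. (of_nat (k choose i) * (-1)^i * x^(k-i)) * conv (\<lambda>y. y^i * F y) G x)"
proof -
  have pw: "F (x - y) * (y^k * G y) =
      (\<Sum>i\<le>k. (of_nat (k choose i) * (-1)^i * x^(k-i)) * ((x - y)^i * F (x - y) * G y))" for y
  proof -
    have "y^k = (-(x - y) + x)^k" by simp
    also have "\<dots> = (\<Sum>i\<le>k. of_nat (k choose i) * (-(x - y))^i * x^(k-i))" by (rule binomial_ring)
    also have "\<dots> = (\<Sum>i\<le>k. of_nat (k choose i) * ((-1)^i * (x - y)^i) * x^(k-i))"
      by (subst power_minus) (rule refl)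
    finally show ?thesis by (simp add: sum_distrib_left sum_distrib_right mult_ac)
  qed
  have "conv F (\<lambda>y. y^k * G y) x = (\<Sum>i\<le>k. integral\<^sup>L (lebesgue_on {0..x})
      (\<lambda>y. (of_nat (k choose i) * (-1)^i * x^(k-i)) * ((x - y)^i * F (x - y) * G y)))"
    unfolding conv_def pw
    by (rule Bochner_Integration.integral_sum) (auto intro!: integrable_lebesgue_on_continuous
        continuous_intros continuous_on_compose_UNIV[OF F] G)
  also have "\<dots> = (\<Sum>i\<le>k. (of_nat (k choose i) * (-1)^i * x^(k-i)) * conv (\<lambda>y. y^i * F y) G x)"
    unfolding conv_def by simp
  finally show ?thesis .
qed

section \<open>Exponential moments\<close>

text \<open>As \<open>n \<rightarrow> \<infinity>\<close> this approximates the indicator of \<open>[u, \<infinity>)\<close>. Expanding \<open>1 - exp (- y)\<close> in powers of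
  \<open>y = exp (n * (t - u))\<close> writes it as a combination of the exponentials \<open>exp (k * n * t)\<close>.\<close>

definition smooth_step :: "nat \<Rightarrow> real \<Rightarrow> real \<Rightarrow> real" where
  "smooth_step n u t = 1 - exp (- exp (real n * (t - u)))"

lemma smooth_step_nonneg: "0 \<le> smooth_step n u t"
  and smooth_step_le_1: "smooth_step n u t \<le> 1"
  by (simp_all add: smooth_step_def)

lemma tendsto_integral_smooth_step:
  fixes h :: "real \<Rightarrow> real"
  assumes h: "continuous_on UNIV h" and u: "0 \<le> u" "u \<le> a"
  shows "(\<lambda>n. integral\<^sup>L (lebesgue_on {0..a}) (\<lambda>t. smooth_step n u t * h t))
    \<longlonglongrightarrow> integral\<^sup>L (lebesgue_on {u..a}) h"
proof -
  have "(\<lambda>n. integral\<^sup>L (lebesgue_on {0..a}) (\<lambda>t. smooth_step n u t * h t))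
      \<longlonglongrightarrow> integral\<^sup>L (lebesgue_on {0..a}) (\<lambda>t. indicator {u..a} t * h t)"
  proof (rule integral_dominated_convergence[where w="\<lambda>t. \<bar>h t\<bar>"])
    show "(\<lambda>t. indicator {u..a} t * h t) \<in> borel_measurable (lebesgue_on {0..a})"
      by (intro borel_measurable_times borel_measurable_lebesgue_on_continuous[OF h]
          borel_measurable_indicator) (use u in \<open>auto simp: sets_restrict_space_iff\<close>)
    show "(\<lambda>t. smooth_step n u t * h t) \<in> borel_measurable (lebesgue_on {0..a})" for n
      unfolding smooth_step_def
      by (intro borel_measurable_lebesgue_on_continuous continuous_intros h)
    show "integrable (lebesgue_on {0..a}) (\<lambda>t. \<bar>h t\<bar>)"
      by (intro integrable_lebesgue_on_continuous continuous_intros h)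
    show "AE t in lebesgue_on {0..a}. (\<lambda>n. smooth_step n u t * h t) \<longlonglongrightarrow> indicator {u..a} t * h t"
      using AE_lebesgue_on_neq[where a=0 and b=a and u=u]
    proof eventually_elim
      case (elim t)
      show ?case
      proof (cases "t < u")
        case True
        then have "(\<lambda>n. smooth_step n u t) \<longlonglongrightarrow> 0" unfolding smooth_step_def by real_asymp
        then show ?thesis using True by (auto intro: tendsto_mult_left_zero)
      next
        case False
        with elim have "u < t" by auto
        then have "(\<lambda>n. smooth_step n u t) \<longlonglongrightarrow> 1" unfolding smooth_step_def by real_asymp
        then have "(\<lambda>n. smooth_step n u t * h t) \<longlonglongrightarrow> 1 * h t" by (intro tendsto_mult tendsto_const)
        with \<open>u < t\<close> elim show ?thesis by (simp add: indicator_def)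
      qed
    qed
    show "AE t in lebesgue_on {0..a}. norm (smooth_step n u t * h t) \<le> \<bar>h t\<bar>" for n
      using smooth_step_nonneg[of n u] smooth_step_le_1[of n u]
      by (auto simp: abs_mult mult_left_le_one_le)
  qed
  then show ?thesis using u by (simp add: integral_lebesgue_on_indicator)
qed

lemma exp_minus_1_sums: "(\<lambda>k. w ^ Suc k / fact (Suc k)) sums (exp w - 1)" for w :: real
proof -
  have "(\<lambda>k. w^(Suc k) /\<^sub>R fact (Suc k)) sums (exp w - 1)"
    using exp_converges[of w] by (subst sums_Suc_iff) simp
  then show ?thesis by (simp add: divide_inverse_commute)
qed

lemma smooth_step_sums:
  "(\<lambda>k. - ((- exp (real n * (t - u))) ^ Suc k / fact (Suc k))) sums smooth_step n u t"
  using sums_minus[OF exp_minus_1_sums[of "- exp (real n * (t - u))"]] by (simp add: smooth_step_def)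

lemma summable_integral_exp_series:
  fixes h y :: "real \<Rightarrow> real"
  assumes h: "continuous_on UNIV h" and y: "continuous_on UNIV y" and Z: "\<And>t. t \<in> {0..a} \<Longrightarrow> \<bar>y t\<bar> \<le> Z"
  shows "summable (\<lambda>k. integral\<^sup>L (lebesgue_on {0..a}) (\<lambda>t. \<bar>y t ^ Suc k / fact (Suc k) * h t\<bar>))"
proof (rule summable_comparison_test')
  show "summable (\<lambda>k. Z ^ Suc k / fact (Suc k) * integral\<^sup>L (lebesgue_on {0..a}) (\<lambda>t. \<bar>h t\<bar>))"
    by (rule summable_mult2) (rule sums_summable[OF exp_minus_1_sums])
  fix k :: nat
  have "integral\<^sup>L (lebesgue_on {0..a}) (\<lambda>t. \<bar>y t ^ Suc k / fact (Suc k) * h t\<bar>) \<le>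
      integral\<^sup>L (lebesgue_on {0..a}) (\<lambda>t. Z ^ Suc k / fact (Suc k) * \<bar>h t\<bar>)"
  proof (rule integral_mono)
    fix t assume "t \<in> space (lebesgue_on {0..a})"
    with Z[of t] have "\<bar>y t\<bar> ^ Suc k \<le> Z ^ Suc k" by (intro power_mono) auto
    then show "\<bar>y t ^ Suc k / fact (Suc k) * h t\<bar> \<le> Z ^ Suc k / fact (Suc k) * \<bar>h t\<bar>"
      unfolding abs_mult abs_divide power_abs abs_of_pos[OF fact_gt_zero]
      by (intro mult_right_mono divide_right_mono) auto
  qed (auto intro!: integrable_mult_right integrable_lebesgue_on_continuous continuous_intros h y)
  then show "norm (integral\<^sup>L (lebesgue_on {0..a}) (\<lambda>t. \<bar>y t ^ Suc k / fact (Suc k) * h t\<bar>)) \<le>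
      Z ^ Suc k / fact (Suc k) * integral\<^sup>L (lebesgue_on {0..a}) (\<lambda>t. \<bar>h t\<bar>)"
    by (simp add: integral_nonneg_AE)
qed

lemma integral_smooth_step_eq_suminf:
  fixes h :: "real \<Rightarrow> real" and n :: nat and u :: real
  assumes h: "continuous_on UNIV h"
  defines "w \<equiv> exp (- (real n * u))"
  shows "integral\<^sup>L (lebesgue_on {0..a}) (\<lambda>t. smooth_step n u t * h t) =
    (\<Sum>k. - ((- w) ^ Suc k / fact (Suc k)) *
      integral\<^sup>L (lebesgue_on {0..a}) (\<lambda>t. exp (real (Suc k * n) * t) * h t))"
proof -
  define y where "y t = - exp (real n * (t - u))" for t
  define g where "g k t = - (y t ^ Suc k / fact (Suc k)) * h t" for k t
  have g_eq: "g k = (\<lambda>t. - ((- w) ^ Suc k / fact (Suc k)) * (exp (real (Suc k * n) * t) * h t))" for k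
  proof
    fix t
    have "exp (real n * (t - u)) ^ Suc k = w ^ Suc k * exp (real (Suc k * n) * t)"
      unfolding w_def power_mult_distrib[symmetric] exp_of_nat_mult[symmetric]
      by (simp add: algebra_simps flip: exp_add)
    then show "g k t = - ((- w) ^ Suc k / fact (Suc k)) * (exp (real (Suc k * n) * t) * h t)"
      unfolding g_def y_def power_minus[of "exp _"] power_minus[of w] by simp
  qed
  have int_g: "integrable (lebesgue_on {0..a}) (g k)" for k
    unfolding g_def y_def by (intro integrable_lebesgue_on_continuous continuous_intros h) auto
  have summable_norm: "summable (\<lambda>k. norm (g k t))" for t
  proof -
    have "summable (\<lambda>k. \<bar>y t\<bar> ^ Suc k / fact (Suc k) * \<bar>h t\<bar>)"
      by (rule summable_mult2) (rule sums_summable[OF exp_minus_1_sums])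
    then show ?thesis by (simp add: g_def abs_mult power_abs del: power_Suc fact_Suc)
  qed
  have summable_integral: "summable (\<lambda>k. integral\<^sup>L (lebesgue_on {0..a}) (\<lambda>t. norm (g k t)))"
    unfolding g_def real_norm_def minus_mult_left[symmetric] abs_minus_cancel
    by (rule summable_integral_exp_series[OF h, where Z="exp (real n * (a - u))"])
      (auto simp: y_def intro!: continuous_intros mult_left_mono)
  have "(\<lambda>k. g k t) sums (smooth_step n u t * h t)" for t
    unfolding g_def y_def by (rule sums_mult2[OF smooth_step_sums])
  then have "integral\<^sup>L (lebesgue_on {0..a}) (\<lambda>t. smooth_step n u t * h t) =
      integral\<^sup>L (lebesgue_on {0..a}) (\<lambda>t. \<Sum>k. g k t)"
    by (intro Bochner_Integration.integral_cong refl) (rule sums_unique)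
  also have "\<dots> = (\<Sum>k. integral\<^sup>L (lebesgue_on {0..a}) (g k))"
    by (rule integral_suminf[OF int_g _ summable_integral]) (use summable_norm in simp)
  finally show ?thesis by (simp only: g_eq integral_mult_right_zero)
qed

lemma abs_integral_smooth_step_le:
  fixes h :: "real \<Rightarrow> real"
  assumes h: "continuous_on UNIV h"
    and bnd: "\<And>m::nat. \<bar>integral\<^sup>L (lebesgue_on {0..a}) (\<lambda>t. exp (real m * t) * h t)\<bar> \<le> M"
  shows "\<bar>integral\<^sup>L (lebesgue_on {0..a}) (\<lambda>t. smooth_step n u t * h t)\<bar> \<le> M * (exp (exp (- (real n * u))) - 1)"
proof -
  define w where "w = exp (- (real n * u))"
  define c where "c k = - ((- w) ^ Suc k / fact (Suc k)) *
      integral\<^sup>L (lebesgue_on {0..a}) (\<lambda>t. exp (real (Suc k * n) * t) * h t)" for k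
  have w: "w > 0" by (simp add: w_def)
  have c_le: "norm (c k) \<le> M * (w ^ Suc k / fact (Suc k))" for k
    using mult_left_mono[OF bnd[of "Suc k * n"], of "w ^ Suc k / fact (Suc k)"] w
    by (simp add: c_def abs_mult power_abs mult.commute)
  have sums_M: "(\<lambda>k. M * (w ^ Suc k / fact (Suc k))) sums (M * (exp w - 1))"
    by (rule sums_mult[OF exp_minus_1_sums])
  have summable_c: "summable (\<lambda>k. norm (c k))"
    by (rule summable_comparison_test'[OF sums_summable[OF sums_M]]) (use c_le in auto)
  have "\<bar>\<Sum>k. c k\<bar> \<le> (\<Sum>k. norm (c k))"
    using summable_norm[OF summable_c] by simp
  also have "\<dots> \<le> (\<Sum>k. M * (w ^ Suc k / fact (Suc k)))"
    by (rule suminf_le[OF c_le summable_c sums_summable[OF sums_M]])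
  also have "\<dots> = M * (exp w - 1)" using sums_unique[OF sums_M] by simp
  finally show ?thesis
    unfolding integral_smooth_step_eq_suminf[OF h] c_def w_def .
qed

lemma integral_tail_eq_0_if_exp_moments_bounded:
  fixes h :: "real \<Rightarrow> real"
  assumes h: "continuous_on UNIV h"
    and bnd: "\<And>n::nat. \<bar>integral\<^sup>L (lebesgue_on {0..a}) (\<lambda>t. exp (real n * t) * h t)\<bar> \<le> M"
    and u: "0 < u" "u \<le> a"
  shows "integral\<^sup>L (lebesgue_on {u..a}) h = 0"
proof -
  have "(\<lambda>n. integral\<^sup>L (lebesgue_on {0..a}) (\<lambda>t. smooth_step n u t * h t))
      \<longlonglongrightarrow> integral\<^sup>L (lebesgue_on {u..a}) h"
    by (rule tendsto_integral_smooth_step[OF h]) (use u in auto)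
  moreover have "(\<lambda>n. integral\<^sup>L (lebesgue_on {0..a}) (\<lambda>t. smooth_step n u t * h t)) \<longlonglongrightarrow> 0"
  proof (rule Lim_null_comparison)
    show "\<forall>\<^sub>F n in sequentially. norm (integral\<^sup>L (lebesgue_on {0..a}) (\<lambda>t. smooth_step n u t * h t))
        \<le> M * (exp (exp (- (real n * u))) - 1)"
      using abs_integral_smooth_step_le[OF h bnd] by simp
    have "(\<lambda>n::nat. exp (exp (- (real n * u))) - 1) \<longlonglongrightarrow> 0" using u by real_asymp
    then show "(\<lambda>n. M * (exp (exp (- (real n * u))) - 1)) \<longlonglongrightarrow> 0"
      by (rule tendsto_mult_right_zero)
  qed
  ultimately show ?thesis by (rule LIMSEQ_unique)
qed

lemma vanishing_if_exp_moments_bounded: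
  fixes h :: "real \<Rightarrow> real"
  assumes h: "continuous_on UNIV h" and a: "a > 0"
    and bnd: "\<And>n::nat. \<bar>integral\<^sup>L (lebesgue_on {0..a}) (\<lambda>t. exp (real n * t) * h t)\<bar> \<le> M"
    and x: "x \<in> {0..a}"
  shows "h x = 0"
proof -
  have ha: "continuous_on {0..a} h" using h by (rule continuous_on_subset) auto
  define G where "G v = integral {0..v} h" for v
  have inner: "h y = 0" if y: "y \<in> {0<..<a}" for y
  proof -
    have "(G has_vector_derivative h y) (at y within {0..a})"
      unfolding G_def by (rule integral_has_vector_derivative[OF ha]) (use y in auto)
    moreover have "at y within {0..a} = at y"
      by (rule at_within_interior) (use y in auto)
    ultimately have "(G has_vector_derivative h y) (at y)" by simp
    moreover have "(G has_vector_derivative 0) (at y)"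
    proof (rule has_vector_derivative_transform_within_open[OF _ open_greaterThanLessThan y])
      show "((\<lambda>_. integral {0..a} h) has_vector_derivative 0) (at y)"
        by (rule has_vector_derivative_const)
      fix v assume v: "v \<in> {0<..<a}"
      have "integral {0..v} h + integral {v..a} h = integral {0..a} h"
        by (rule Henstock_Kurzweil_Integration.integral_combine)
          (use v ha in \<open>auto intro: integrable_continuous_real\<close>)
      moreover have "integral {v..a} h = 0"
        using integral_tail_eq_0_if_exp_moments_bounded[OF h bnd, of v] v
        by (simp add: integral_lebesgue_on_continuous[OF h])
      ultimately show "integral {0..a} h = G v" by (simp add: G_def)
    qed
    ultimately show ?thesis by (rule vector_derivative_unique_at)
  qed
  show ?thesis
    by (rule continuous_constant_on_closure[where S="{0<..<a}"]) (use a ha inner x in auto)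
qed

lemma abs_integral_exp_kernel_le:
  fixes h :: "real \<Rightarrow> real"
  assumes h: "continuous_on UNIV h" and r: "\<And>y. y \<in> {a..b} \<Longrightarrow> r - y \<le> T"
  shows "\<bar>integral {a..b} (\<lambda>y. exp (real n * (r - y)) * h y)\<bar> \<le>
    exp (real n * T) * integral {a..b} (\<lambda>y. \<bar>h y\<bar>)"
proof (rule abs_integral_le_integral_abs)
  fix y assume "y \<in> {a..b}"
  then have "exp (real n * (r - y)) \<le> exp (real n * T)" using r by (simp add: mult_left_mono)
  then show "\<bar>exp (real n * (r - y)) * h y\<bar> \<le> exp (real n * T) * \<bar>h y\<bar>"
    by (simp add: abs_mult mult_right_mono)
qed (auto intro!: continuous_intros h)

lemma conv_exp_split:
  fixes h :: "real \<Rightarrow> real"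
  assumes h: "continuous_on UNIV h" and x: "x \<in> {0..T}"
  shows "conv (\<lambda>z. exp (real n * z)) h (2*T - x) =
    exp (real n * (T - x)) * integral {0..T} (\<lambda>y. exp (real n * (T - y)) * h y) +
    integral {T..2*T-x} (\<lambda>y. exp (real n * (2*T - x - y)) * h y)"
proof -
  have cE: "continuous_on UNIV (\<lambda>z. exp (real n * z))" by (intro continuous_intros)
  have "conv (\<lambda>z. exp (real n * z)) h (2*T - x) =
      integral {0..T} (\<lambda>y. exp (real n * (2*T - x - y)) * h y) +
      integral {T..2*T-x} (\<lambda>y. exp (real n * (2*T - x - y)) * h y)"
    unfolding conv_eq_integral[OF cE h]
    by (rule Henstock_Kurzweil_Integration.integral_combine[symmetric])
      (use x in \<open>auto intro!: integrable_on_Icc_continuous continuous_intros h\<close>)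
  moreover have "exp (real n * (2*T - x - y)) = exp (real n * (T - x)) * exp (real n * (T - y))" for y
    by (simp flip: exp_add) (simp add: algebra_simps)
  ultimately show ?thesis by (simp add: mult.assoc)
qed

lemma conv_exp_bounds:
  fixes h :: "real \<Rightarrow> real" and n :: nat
  assumes h: "continuous_on UNIV h"
  shows "x \<in> {0..T} \<Longrightarrow> \<bar>conv (\<lambda>z. exp (real n * z)) h (2*T - x) -
      exp (real n * (T - x)) * integral {0..T} (\<lambda>y. exp (real n * (T - y)) * h y)\<bar>
      \<le> exp (real n * T) * integral {0..2*T} (\<lambda>y. \<bar>h y\<bar>)"
    and "x \<in> {T..2*T} \<Longrightarrow> \<bar>conv (\<lambda>z. exp (real n * z)) h (2*T - x)\<bar>
      \<le> exp (real n * T) * integral {0..2*T} (\<lambda>y. \<bar>h y\<bar>)"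
proof -
  have cE: "continuous_on UNIV (\<lambda>z. exp (real n * z))" by (intro continuous_intros)
  show "\<bar>conv (\<lambda>z. exp (real n * z)) h (2*T - x) -
      exp (real n * (T - x)) * integral {0..T} (\<lambda>y. exp (real n * (T - y)) * h y)\<bar>
      \<le> exp (real n * T) * integral {0..2*T} (\<lambda>y. \<bar>h y\<bar>)" if x: "x \<in> {0..T}"
  proof -
    have "\<bar>integral {T..2*T-x} (\<lambda>y. exp (real n * (2*T - x - y)) * h y)\<bar>
        \<le> exp (real n * T) * integral {T..2*T-x} (\<lambda>y. \<bar>h y\<bar>)"
      by (rule abs_integral_exp_kernel_le[OF h]) (use x in auto)
    also have "\<dots> \<le> exp (real n * T) * integral {0..2*T} (\<lambda>y. \<bar>h y\<bar>)"
      using x by (intro mult_left_mono integral_abs_mono_interval h) auto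
    finally show ?thesis by (simp add: conv_exp_split[OF h x])
  qed
  show "\<bar>conv (\<lambda>z. exp (real n * z)) h (2*T - x)\<bar>
      \<le> exp (real n * T) * integral {0..2*T} (\<lambda>y. \<bar>h y\<bar>)" if x: "x \<in> {T..2*T}"
  proof -
    have "\<bar>conv (\<lambda>z. exp (real n * z)) h (2*T - x)\<bar> \<le> exp (real n * T) * integral {0..2*T-x} (\<lambda>y. \<bar>h y\<bar>)"
      unfolding conv_eq_integral[OF cE h] by (rule abs_integral_exp_kernel_le[OF h]) (use x in auto)
    also have "\<dots> \<le> exp (real n * T) * integral {0..2*T} (\<lambda>y. \<bar>h y\<bar>)"
      using x by (intro mult_left_mono integral_abs_mono_interval h) auto
    finally show ?thesis .
  qed
qed

text \<open>If \<open>h * h\<close> vanishes on \<open>[0, 2T]\<close>, then so does \<open>(E * h) * h\<close> for \<open>E z = exp (n z)\<close>.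
  Splitting this convolution at \<open>T\<close> shows that the square of the exponential moment
  \<open>J = \<integral>\<^sub>0\<^sup>T E (T - x) h x dx\<close> is cancelled by terms of size at most \<open>E T * K\<^sup>2\<close>.\<close>

lemma square_exp_moment_le_if_conv_self_zero:
  fixes h :: "real \<Rightarrow> real" and n :: nat
  assumes h: "continuous_on UNIV h" and T: "T > 0"
    and hh: "\<And>s. s \<in> {0..2*T} \<Longrightarrow> conv h h s = 0"
  shows "(integral {0..T} (\<lambda>x. exp (real n * (T - x)) * h x))\<^sup>2 \<le>
    exp (real n * T) * (integral {0..2*T} (\<lambda>x. \<bar>h x\<bar>))\<^sup>2"
proof -
  define E where "E = (\<lambda>z. exp (real n * z))"
  define J where "J = integral {0..T} (\<lambda>x. E (T - x) * h x)"
  define K where "K = integral {0..2*T} (\<lambda>x. \<bar>h x\<bar>)"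
  define \<Psi> where "\<Psi> = conv E h"
  define \<rho> where "\<rho> x = \<Psi> (2*T - x) - E (T - x) * J" for x
  have cE: "continuous_on UNIV E" unfolding E_def by (intro continuous_intros)
  have c\<Psi>: "continuous_on UNIV \<Psi>" unfolding \<Psi>_def by (rule continuous_on_conv[OF cE h])
  have K: "K \<ge> 0" unfolding K_def by (rule integral_nonneg) (auto intro!: integrable_on_Icc_continuous continuous_intros h)
  have "integral {0..2*T} (\<lambda>x. \<Psi> (2*T - x) * h x) = conv E (conv h h) (2*T)"
    unfolding \<Psi>_def conv_eq_integral[OF continuous_on_conv[OF cE h] h, symmetric]
    by (simp add: conv_assoc[OF cE h h])
  also have "\<dots> = 0" unfolding conv_def[of E] by (rule integral_lebesgue_on_eq_0) (use hh in auto)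
  finally have Q0: "integral {0..2*T} (\<lambda>x. \<Psi> (2*T - x) * h x) = 0" .
  have split: "integral {0..2*T} (\<lambda>x. \<Psi> (2*T - x) * h x) =
      integral {0..T} (\<lambda>x. \<Psi> (2*T - x) * h x) + integral {T..2*T} (\<lambda>x. \<Psi> (2*T - x) * h x)"
    by (rule Henstock_Kurzweil_Integration.integral_combine[symmetric])
      (use T in \<open>auto intro!: integrable_on_Icc_continuous continuous_intros continuous_on_compose_UNIV[OF c\<Psi>] h\<close>)
  have "integral {0..T} (\<lambda>x. \<Psi> (2*T - x) * h x) = integral {0..T} (\<lambda>x. J * (E (T - x) * h x) + \<rho> x * h x)"
    unfolding \<rho>_def by (simp add: algebra_simps)
  also have "\<dots> = J * J + integral {0..T} (\<lambda>x. \<rho> x * h x)"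
    unfolding J_def \<rho>_def
    by (subst integral_add) (auto intro!: integrable_on_Icc_continuous continuous_intros
        continuous_on_compose_UNIV[OF c\<Psi>] continuous_on_compose_UNIV[OF cE] h)
  finally have JJ: "J * J = - integral {0..T} (\<lambda>x. \<rho> x * h x) - integral {T..2*T} (\<lambda>x. \<Psi> (2*T - x) * h x)"
    using Q0 split by linarith
  have \<rho>: "\<bar>\<rho> x\<bar> \<le> E T * K" if "x \<in> {0..T}" for x
    using conv_exp_bounds(1)[OF h that] by (simp add: \<rho>_def \<Psi>_def E_def J_def K_def)
  have \<Psi>: "\<bar>\<Psi> (2*T - x)\<bar> \<le> E T * K" if "x \<in> {T..2*T}" for x
    using conv_exp_bounds(2)[OF h that] by (simp add: \<Psi>_def E_def K_def)
  have cP: "continuous_on UNIV (\<lambda>x. \<Psi> (2*T - x))" by (intro continuous_on_compose_UNIV[OF c\<Psi>] continuous_intros)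
  have c\<rho>: "continuous_on UNIV \<rho>" unfolding \<rho>_def by (intro cP continuous_intros continuous_on_compose_UNIV[OF cE])
  have "\<bar>integral {0..T} (\<lambda>x. \<rho> x * h x)\<bar> \<le> (E T * K) * integral {0..T} (\<lambda>x. \<bar>h x\<bar>)"
    by (rule abs_integral_le_integral_abs)
      (use \<rho> K in \<open>auto intro!: continuous_intros c\<rho> h simp: abs_mult mult_right_mono E_def\<close>)
  moreover have "\<bar>integral {T..2*T} (\<lambda>x. \<Psi> (2*T - x) * h x)\<bar> \<le> (E T * K) * integral {T..2*T} (\<lambda>x. \<bar>h x\<bar>)"
    by (rule abs_integral_le_integral_abs)
      (use \<Psi> K in \<open>auto intro!: continuous_intros cP h simp: abs_mult mult_right_mono E_def\<close>)
  ultimately have "J * J \<le> (E T * K) * integral {0..T} (\<lambda>x. \<bar>h x\<bar>) + (E T * K) * integral {T..2*T} (\<lambda>x. \<bar>h x\<bar>)"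
    unfolding JJ by linarith
  also have "\<dots> = E T * K * K"
    unfolding K_def distrib_left[symmetric]
    by (subst Henstock_Kurzweil_Integration.integral_combine) (use T in \<open>auto intro!:
        integrable_on_Icc_continuous continuous_intros h\<close>)
  finally show ?thesis by (simp add: J_def K_def E_def power2_eq_square mult.assoc)
qed

lemma exp_moment_bound_if_conv_self_zero:
  fixes h :: "real \<Rightarrow> real" and n :: nat
  assumes h: "continuous_on UNIV h" and T: "T > 0"
    and hh: "\<And>s. s \<in> {0..2*T} \<Longrightarrow> conv h h s = 0"
  shows "\<bar>integral {0..T/2} (\<lambda>x. exp (real n * (T/2 - x)) * h x)\<bar> \<le> 2 * integral {0..2*T} (\<lambda>x. \<bar>h x\<bar>)"
proof -
  define K where "K = integral {0..2*T} (\<lambda>x. \<bar>h x\<bar>)"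
  define L where "L = integral {0..T/2} (\<lambda>x. exp (real n * (T/2 - x)) * h x)"
  define R where "R = integral {T/2..T} (\<lambda>x. exp (real n * (T/2 - x)) * h x)"
  have K: "K \<ge> 0" unfolding K_def by (rule integral_nonneg) (auto intro!: integrable_on_Icc_continuous continuous_intros h)
  have exp_half: "exp (real n * (T - x)) = exp (real n * (T/2)) * exp (real n * (T/2 - x))" for x
    by (simp flip: exp_add) (simp add: algebra_simps)
  have "integral {0..T} (\<lambda>x. exp (real n * (T - x)) * h x) = exp (real n * (T/2)) * (L + R)"
    unfolding L_def R_def distrib_left exp_half mult.assoc integral_mult_right[symmetric]
    by (rule Henstock_Kurzweil_Integration.integral_combine[symmetric])
      (use T in \<open>auto intro!: integrable_on_Icc_continuous continuous_intros h\<close>)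
  with square_exp_moment_le_if_conv_self_zero[OF h T hh, of n]
  have "(exp (real n * (T/2)) * (L + R))\<^sup>2 \<le> (exp (real n * (T/2)) * K)\<^sup>2"
    unfolding K_def by (simp add: power_mult_distrib flip: exp_double)
  then have "\<bar>L + R\<bar> \<le> K"
    using K by (subst (asm) abs_le_square_iff[symmetric]) (simp add: abs_mult)
  moreover have "\<bar>R\<bar> \<le> K"
  proof -
    have "\<bar>R\<bar> \<le> exp (real n * 0) * integral {T/2..T} (\<lambda>x. \<bar>h x\<bar>)"
      unfolding R_def by (rule abs_integral_exp_kernel_le[OF h]) auto
    also have "\<dots> \<le> K" unfolding K_def using T by (simp add: integral_abs_mono_interval[OF h])
    finally show ?thesis .
  qed
  ultimately show ?thesis unfolding L_def[symmetric] K_def[symmetric] by linarith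
qed

lemma conv_self_zero_imp_vanishing_quarter:
  fixes h :: "real \<Rightarrow> real"
  assumes h: "continuous_on UNIV h" and T: "T > 0"
    and hh: "\<And>s. s \<in> {0..2*T} \<Longrightarrow> conv h h s = 0"
    and x: "x \<in> {0..T/2}"
  shows "h x = 0"
proof -
  define h' where "h' t = h (T/2 - t)" for t
  have "h' (T/2 - x) = 0"
  proof (rule vanishing_if_exp_moments_bounded[where h=h' and a="T/2"])
    show "continuous_on UNIV h'" unfolding h'_def by (intro continuous_on_compose_UNIV[OF h] continuous_intros)
    show "T/2 > 0" "T/2 - x \<in> {0..T/2}" using x T by auto
    fix n :: nat
    have "integral\<^sup>L (lebesgue_on {0..T/2}) (\<lambda>t. exp (real n * t) * h' t)
        = integral {0..T/2} (\<lambda>t. exp (real n * (T/2 - t)) * h t)"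
      unfolding h'_def by (subst integral_lebesgue_on_reflect)
        (simp add: integral_lebesgue_on_continuous continuous_intros h)
    then show "\<bar>integral\<^sup>L (lebesgue_on {0..T/2}) (\<lambda>t. exp (real n * t) * h' t)\<bar>
        \<le> 2 * integral {0..2*T} (\<lambda>x. \<bar>h x\<bar>)"
      using exp_moment_bound_if_conv_self_zero[OF h T hh] by simp
  qed
  then show ?thesis unfolding h'_def by simp
qed

section \<open>Titchmarsh's convolution theorem\<close>

lemma vanishing_closed_if_vanishing_open:
  fixes h :: "real \<Rightarrow> real"
  assumes h: "continuous_on {0..a} h" and h0: "h 0 = 0"
    and vanish: "\<And>x. 0 \<le> x \<Longrightarrow> x < a \<Longrightarrow> h x = 0" and y: "y \<in> {0..a}"
  shows "h y = 0"
proof (cases "y < a")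
  case False
  with y have "y = a" by simp
  show ?thesis
  proof (cases "a = 0")
    case False
    with y have a: "0 < a" by simp
    have cont: "continuous_on (closure {0..<a}) h" using h a by simp
    have "y \<in> closure {0..<a}" using \<open>y = a\<close> a by simp
    from continuous_constant_on_closure[OF cont _ this] vanish show ?thesis by auto
  qed (use \<open>y = a\<close> h0 in simp)
qed (use vanish y in auto)

lemma maximal_vanishing_interval:
  fixes h :: "real \<Rightarrow> real"
  assumes "T \<ge> 0"
  obtains a where "0 \<le> a" "a \<le> T" "\<And>x. 0 \<le> x \<Longrightarrow> x < a \<Longrightarrow> h x = 0"
    "\<And>a'. a < a' \<Longrightarrow> a' \<le> T \<Longrightarrow> \<exists>x. 0 \<le> x \<and> x < a' \<and> h x \<noteq> 0"
proof -
  define A where "A = {a. 0 \<le> a \<and> a \<le> T \<and> (\<forall>x. 0 \<le> x \<and> x < a \<longrightarrow> h x = 0)}"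
  have A0: "0 \<in> A" using assms by (auto simp: A_def)
  have bdd: "bdd_above A" by (rule bdd_aboveI[where M=T]) (auto simp: A_def)
  show ?thesis
  proof
    show "0 \<le> Sup A" by (rule cSup_upper[OF A0 bdd])
    show "Sup A \<le> T" by (rule cSup_least) (use A0 in \<open>auto simp: A_def\<close>)
    fix x assume x: "0 \<le> x" "x < Sup A"
    then obtain a where "a \<in> A" "x < a" using less_cSup_iff[OF _ bdd] A0 by blast
    with x show "h x = 0" by (auto simp: A_def)
  next
    fix a' assume "Sup A < a'" "a' \<le> T"
    with cSup_upper[OF _ bdd, of a'] show "\<exists>x. 0 \<le> x \<and> x < a' \<and> h x \<noteq> 0"
      using cSup_upper[OF A0 bdd] by (force simp: A_def)
  qed
qed

lemma vanishing_by_continuation: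
  fixes h :: "real \<Rightarrow> real"
  assumes L: "L > 0" and h: "continuous_on UNIV h"
    and step: "\<And>a. 0 \<le> a \<Longrightarrow> a < L \<Longrightarrow> (\<And>x. 0 \<le> x \<Longrightarrow> x < a \<Longrightarrow> h x = 0) \<Longrightarrow>
                  \<exists>a'>a. \<forall>x. 0 \<le> x \<and> x \<le> a' \<longrightarrow> h x = 0"
    and x: "x \<in> {0..L}"
  shows "h x = 0"
proof -
  obtain a where a: "0 \<le> a" "a \<le> L" and vanish: "\<And>x. 0 \<le> x \<Longrightarrow> x < a \<Longrightarrow> h x = 0"
    and max: "\<And>a'. a < a' \<Longrightarrow> a' \<le> L \<Longrightarrow> \<exists>x. 0 \<le> x \<and> x < a' \<and> h x \<noteq> 0"
    using maximal_vanishing_interval[of L h] L by auto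
  have "a = L"
  proof (rule ccontr)
    assume "a \<noteq> L"
    with a obtain a' where "a' > a" "\<forall>x. 0 \<le> x \<and> x \<le> a' \<longrightarrow> h x = 0"
      using step[OF _ _ vanish] by (metis order_less_le)
    with max[of "min a' L"] \<open>a \<noteq> L\<close> a show False by auto
  qed
  with L have "h 0 = 0" by (intro vanish) auto
  from vanishing_closed_if_vanishing_open[OF continuous_on_subset[OF h] this vanish] x \<open>a = L\<close>
  show ?thesis by auto
qed

lemma conv_self_zero_imp_vanishing_half:
  fixes h :: "real \<Rightarrow> real"
  assumes h: "continuous_on UNIV h" and c: "c > 0"
    and hh: "\<And>s. s \<in> {0..c} \<Longrightarrow> conv h h s = 0"
    and x: "x \<in> {0..c/2}"
  shows "h x = 0"
proof (rule vanishing_by_continuation[OF _ h _ x])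
  fix a assume a: "0 \<le> a" "a < c/2" and vanish: "\<And>x. 0 \<le> x \<Longrightarrow> x < a \<Longrightarrow> h x = 0"
  define T where "T = (c - 2*a) / 2"
  have T: "T > 0" using a by (simp add: T_def)
  have shifted: "h (y + a) = 0" if "y \<in> {0..T/2}" for y
  proof (rule conv_self_zero_imp_vanishing_quarter[OF _ T _ that, where h="\<lambda>y. h (y + a)"])
    show "continuous_on UNIV (\<lambda>y. h (y + a))" by (intro continuous_on_compose_UNIV[OF h] continuous_intros)
    fix s assume s: "s \<in> {0..2*T}"
    have "conv (\<lambda>y. h (y + a)) (\<lambda>y. h (y + a)) s = conv h h (s + a + a)"
      by (rule conv_shift[symmetric]) (use a s vanish in auto)
    also have "\<dots> = 0" by (rule hh) (use a s in \<open>auto simp: T_def\<close>)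
    finally show "conv (\<lambda>y. h (y + a)) (\<lambda>y. h (y + a)) s = 0" .
  qed
  have "h y = 0" if "0 \<le> y" "y \<le> a + T/2" for y
    using vanish[of y] shifted[of "y - a"] that by (cases "y < a") auto
  moreover have "a + T/2 > a" using T by simp
  ultimately show "\<exists>a'>a. \<forall>x. 0 \<le> x \<and> x \<le> a' \<longrightarrow> h x = 0" by blast
qed (use c in auto)

lemma integral_square_le_if_moments_zero:
  fixes m :: "real \<Rightarrow> real"
  assumes m: "continuous_on UNIV m" and mom: "\<And>k. integral {0..s} (\<lambda>y. y^k * m y) = 0" and e: "e > 0"
  shows "integral {0..s} (\<lambda>y. m y * m y) \<le> e * integral {0..s} (\<lambda>y. \<bar>m y\<bar>)"
proof -
  have "continuous_on {0..s} m" using m by (rule continuous_on_subset) auto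
  from Stone_Weierstrass_real_polynomial_function[OF compact_Icc this e]
  obtain p where p: "real_polynomial_function p" "\<And>x. x \<in> {0..s} \<Longrightarrow> \<bar>m x - p x\<bar> < e" by blast
  from p(1) obtain a n where p_eq: "p = (\<lambda>x. \<Sum>i\<le>n. a i * x^i)"
    unfolding real_polynomial_function_iff_sum by blast
  have cp: "continuous_on UNIV p" unfolding p_eq by (intro continuous_intros)
  have "integral {0..s} (\<lambda>y. p y * m y) = (\<Sum>i\<le>n. a i * integral {0..s} (\<lambda>y. y^i * m y))"
    unfolding p_eq sum_distrib_right mult.assoc
    by (subst Henstock_Kurzweil_Integration.integral_sum)
      (auto intro!: integrable_on_Icc_continuous continuous_intros m)
  then have "integral {0..s} (\<lambda>y. m y * m y) = integral {0..s} (\<lambda>y. (m y - p y) * m y)"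
    using mom by (simp add: left_diff_distrib integral_diff integrable_on_Icc_continuous continuous_intros cp m)
  also have "\<dots> \<le> integral {0..s} (\<lambda>y. e * \<bar>m y\<bar>)"
  proof (rule integral_le)
    fix x assume "x \<in> {0..s}"
    have "(m x - p x) * m x \<le> \<bar>m x - p x\<bar> * \<bar>m x\<bar>" by (simp add: abs_mult[symmetric])
    also have "\<dots> \<le> e * \<bar>m x\<bar>" using p(2)[OF \<open>x \<in> {0..s}\<close>] by (intro mult_right_mono) auto
    finally show "(m x - p x) * m x \<le> e * \<bar>m x\<bar>" .
  qed (auto intro!: integrable_on_Icc_continuous continuous_intros m cp)
  finally show ?thesis by simp
qed

lemma vanishing_if_moments_zero:
  fixes m :: "real \<Rightarrow> real"
  assumes m: "continuous_on UNIV m" and s: "s > 0"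
    and mom: "\<And>k. integral {0..s} (\<lambda>y. y^k * m y) = 0"
    and y: "y \<in> {0..s}"
  shows "m y = 0"
proof -
  define C where "C = integral {0..s} (\<lambda>y. \<bar>m y\<bar>)"
  have C: "C \<ge> 0" unfolding C_def
    by (rule integral_nonneg) (auto intro!: integrable_on_Icc_continuous continuous_intros m)
  have "integral {0..s} (\<lambda>y. m y * m y) \<le> 0"
  proof (rule field_le_epsilon)
    fix e :: real assume e: "e > 0"
    have "integral {0..s} (\<lambda>y. m y * m y) \<le> (e / (C + 1)) * C"
      by (rule integral_square_le_if_moments_zero[OF m mom, folded C_def]) (use e C in auto)
    also have "\<dots> \<le> e" using e C by (simp add: field_simps)
    finally show "integral {0..s} (\<lambda>y. m y * m y) \<le> 0 + e" by simp
  qed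
  moreover have "integral {0..s} (\<lambda>y. m y * m y) \<ge> 0"
    by (rule integral_nonneg) (auto intro!: integrable_on_Icc_continuous continuous_intros m)
  ultimately have "integral {0..s} (\<lambda>y. m y * m y) = 0" by simp
  then have "\<forall>x\<in>{0..s}. m x * m x = 0"
    by (subst (asm) integral_eq_0_iff) (use s in \<open>auto intro!: continuous_intros continuous_on_subset[OF m]\<close>)
  with y show ?thesis by simp
qed

text \<open>With \<open>P y = y\<^sup>k F y\<close> and \<open>Q y = y\<^sup>k G y\<close>, commutativity and associativity give
  \<open>(P * G) * (F * Q) = (P * Q) * (F * G)\<close>, which vanishes on \<open>[0, S]\<close>. Expanding \<open>F * Q\<close> binomially
  leaves \<open>(P * G) * (P * G)\<close> as the only term not already known to vanish.\<close>

lemma conv_self_moment_zero: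
  fixes F G :: "real \<Rightarrow> real"
  assumes F: "continuous_on UNIV F" and G: "continuous_on UNIV G"
    and FG: "\<And>s. s \<in> {0..S} \<Longrightarrow> conv F G s = 0"
    and lower: "\<And>i x. i < k \<Longrightarrow> x \<in> {0..S/2} \<Longrightarrow> conv (\<lambda>y. y^i * F y) G x = 0"
    and initial: "\<And>x. x \<in> {0..a} \<Longrightarrow> conv (\<lambda>y. y^k * F y) G x = 0"
    and a: "a \<le> S/2" and s: "s \<in> {0..a + S/2}"
  defines "A \<equiv> \<lambda>i. conv (\<lambda>y. y^i * F y) G"
  shows "conv (A k) (A k) s = 0"
proof -
  define P where "P = (\<lambda>y::real. y^k * F y)"
  define Q where "Q = (\<lambda>y::real. y^k * G y)"
  define c where "c i = (of_nat (k choose i) * (-1)^i :: real)" for i :: nat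
  have cP: "continuous_on UNIV P" unfolding P_def by (intro continuous_intros F)
  have cQ: "continuous_on UNIV Q" unfolding Q_def by (intro continuous_intros G)
  have cA: "continuous_on UNIV (A i)" for i
    unfolding A_def by (intro continuous_on_conv continuous_intros F G)
  have cFG: "continuous_on UNIV (conv F G)" by (rule continuous_on_conv[OF F G])
  have "conv (A k) (conv F Q) = conv P (conv G (conv F Q))"
    unfolding A_def P_def[symmetric] by (rule conv_assoc[OF cP G continuous_on_conv[OF F cQ], symmetric])
  also have "conv G (conv F Q) = conv (conv F G) Q"
    by (subst conv_assoc[OF G F cQ]) (simp only: conv_commute[of G F])
  also have "\<dots> = conv Q (conv F G)" by (rule conv_commute)
  also have "conv P (conv Q (conv F G)) = conv (conv P Q) (conv F G)"
    by (rule conv_assoc[OF cP cQ cFG])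
  finally have "conv (A k) (conv F Q) s = conv (conv P Q) (conv F G) s" by simp
  also have "\<dots> = 0"
    by (rule conv_eq_0_if_vanishing[where a=0 and b=S]) (use FG a s in \<open>auto simp: conv_at_0\<close>)
  moreover have "conv (A k) (conv F Q) s = (\<Sum>i\<le>k. c i * conv (A k) (\<lambda>x. x^(k-i) * A i x) s)"
  proof -
    have "conv (A k) (conv F Q) s = conv (A k) (\<lambda>x. \<Sum>i\<le>k. c i * (x^(k-i) * A i x)) s"
      by (rule conv_cong) (unfold Q_def conv_power_weight[OF F G] A_def c_def, simp_all add: mult_ac)
    also have "\<dots> = (\<Sum>i\<le>k. conv (A k) (\<lambda>x. c i * (x^(k-i) * A i x)) s)"
      by (rule conv_sum_right[OF cA]) (intro continuous_intros cA)
    finally show ?thesis by (simp add: conv_cmult_right)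
  qed
  moreover have "conv (A k) (\<lambda>x. x^(k-i) * A i x) s = 0" if "i < k" for i
    by (rule conv_eq_0_if_vanishing[where a=a and b="S/2"])
      (use initial lower that s in \<open>auto simp: A_def\<close>)
  ultimately have "c k * conv (A k) (A k) s = 0"
    by (simp add: lessThan_Suc_atMost[symmetric])
  moreover have "c k \<noteq> 0" by (simp add: c_def)
  ultimately show ?thesis by simp
qed

lemma conv_moment_zero:
  fixes F G :: "real \<Rightarrow> real"
  assumes F: "continuous_on UNIV F" and G: "continuous_on UNIV G" and S: "S > 0"
    and FG: "\<And>s. s \<in> {0..S} \<Longrightarrow> conv F G s = 0"
    and x: "x \<in> {0..S/2}"
  shows "conv (\<lambda>y. y^k * F y) G x = 0"
  using x
proof (induction k arbitrary: x rule: less_induct)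
  case (less k)
  define A where "A = conv (\<lambda>y. y^k * F y) G"
  have cA: "continuous_on UNIV A" unfolding A_def by (intro continuous_on_conv continuous_intros F G)
  have "A x = 0"
  proof (rule vanishing_by_continuation[OF _ cA _ less.prems])
    fix a assume a: "0 \<le> a" "a < S/2" and vanish: "\<And>x. 0 \<le> x \<Longrightarrow> x < a \<Longrightarrow> A x = 0"
    have initial: "A y = 0" if "y \<in> {0..a}" for y
      by (rule vanishing_closed_if_vanishing_open[OF continuous_on_subset[OF cA] _ vanish that])
        (auto simp: A_def conv_at_0)
    have AA: "conv A A s = 0" if "s \<in> {0..a + S/2}" for s
      unfolding A_def
      by (rule conv_self_moment_zero[OF F G FG _ _ _ that]) (use less.IH initial a in \<open>auto simp: A_def\<close>)
    have "A y = 0" if "y \<in> {0..(a + S/2)/2}" for y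
      by (rule conv_self_zero_imp_vanishing_half[OF cA _ AA that]) (use a S in auto)
    then show "\<exists>a'>a. \<forall>x. 0 \<le> x \<and> x \<le> a' \<longrightarrow> A x = 0"
      using a by (intro exI[where x="(a + S/2)/2"]) auto
  qed (use S in auto)
  then show ?case by (simp add: A_def)
qed

lemma conv_zero_imp_vanishing_near_0:
  fixes F G :: "real \<Rightarrow> real"
  assumes F: "continuous_on UNIV F" and G: "continuous_on UNIV G" and S: "S > 0"
    and FG: "\<And>s. s \<in> {0..S} \<Longrightarrow> conv F G s = 0"
  obtains \<epsilon> where "\<epsilon> > 0" "(\<forall>x\<in>{0..\<epsilon>}. F x = 0) \<or> (\<forall>x\<in>{0..\<epsilon>}. G x = 0)"
proof -
  have product_zero: "F y * G (s - y) = 0" if s: "0 < s" "s \<le> S/2" and y: "y \<in> {0..s}" for s y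
  proof (rule vanishing_if_moments_zero[where m="\<lambda>y. F y * G (s - y)", OF _ s(1) _ y])
    show "continuous_on UNIV (\<lambda>y. F y * G (s - y))"
      by (intro continuous_intros F continuous_on_compose_UNIV[OF G])
    fix k :: nat
    have "integral {0..s} (\<lambda>y. y^k * (F y * G (s - y))) =
        integral\<^sup>L (lebesgue_on {0..s}) (\<lambda>y. y^k * (F y * G (s - y)))"
      by (rule integral_lebesgue_on_continuous[symmetric])
        (intro continuous_intros F continuous_on_compose_UNIV[OF G])
    also have "\<dots> = conv (\<lambda>y. y^k * F y) G s"
      unfolding conv_def by (subst integral_lebesgue_on_reflect) (simp add: mult_ac)
    also have "\<dots> = 0" by (rule conv_moment_zero[OF F G S FG]) (use s in auto)
    finally show "integral {0..s} (\<lambda>y. y^k * (F y * G (s - y))) = 0" .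
  qed
  show ?thesis
  proof (cases "\<forall>x\<in>{0..S/4}. F x = 0")
    case False
    then obtain y0 where y0: "y0 \<in> {0..S/4}" "F y0 \<noteq> 0" by blast
    have G0: "G z = 0" if "z \<in> {0<..S/4}" for z
      using product_zero[of "y0 + z" y0] y0 that by auto
    have "G x = 0" if "x \<in> {0..S/4}" for x
    proof (rule continuous_constant_on_closure[OF continuous_on_subset[OF G] G0])
      show "x \<in> closure {0<..S/4}" using S that by simp
    qed auto
    with that[of "S/4"] S show ?thesis by auto
  qed (use that[of "S/4"] S in auto)
qed

lemma titchmarsh_continuous:
  fixes F G :: "real \<Rightarrow> real"
  assumes F: "continuous_on UNIV F" and G: "continuous_on UNIV G" and T: "T > 0"
    and FG: "\<And>s. s \<in> {0..T} \<Longrightarrow> conv F G s = 0"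
  obtains a b where "0 \<le> a" "0 \<le> b" "T \<le> a + b"
    "\<And>x. 0 \<le> x \<Longrightarrow> x < a \<Longrightarrow> F x = 0" "\<And>x. 0 \<le> x \<Longrightarrow> x < b \<Longrightarrow> G x = 0"
proof -
  obtain a where a: "0 \<le> a" "a \<le> T" and Fa: "\<And>x. 0 \<le> x \<Longrightarrow> x < a \<Longrightarrow> F x = 0"
    and max_a: "\<And>a'. a < a' \<Longrightarrow> a' \<le> T \<Longrightarrow> \<exists>x. 0 \<le> x \<and> x < a' \<and> F x \<noteq> 0"
    using maximal_vanishing_interval[of T F] T by auto
  obtain b where b: "0 \<le> b" "b \<le> T" and Gb: "\<And>x. 0 \<le> x \<Longrightarrow> x < b \<Longrightarrow> G x = 0"
    and max_b: "\<And>b'. b < b' \<Longrightarrow> b' \<le> T \<Longrightarrow> \<exists>x. 0 \<le> x \<and> x < b' \<and> G x \<noteq> 0"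
    using maximal_vanishing_interval[of T G] T by auto
  have "T \<le> a + b"
  proof (rule ccontr)
    assume "\<not> T \<le> a + b"
    then have S: "T - a - b > 0" by simp
    have shifted: "conv (\<lambda>x. F (x + a)) (\<lambda>x. G (x + b)) s = 0" if "s \<in> {0..T - a - b}" for s
      using conv_shift[of a b s F G] FG[of "s + a + b"] Fa Gb a b that by auto
    obtain \<epsilon> where "\<epsilon> > 0" and
      "(\<forall>x\<in>{0..\<epsilon>}. F (x + a) = 0) \<or> (\<forall>x\<in>{0..\<epsilon>}. G (x + b) = 0)"
      by (rule conv_zero_imp_vanishing_near_0[OF _ _ S shifted])
        (intro continuous_on_compose_UNIV[OF F] continuous_on_compose_UNIV[OF G] continuous_intros)+
    then consider (F) "\<forall>x\<in>{0..\<epsilon>}. F (x + a) = 0" | (G) "\<forall>x\<in>{0..\<epsilon>}. G (x + b) = 0" by blast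
    then show False
    proof cases
      case F
      obtain x where x: "0 \<le> x" "x < min (a + \<epsilon>) T" "F x \<noteq> 0"
        using max_a[of "min (a + \<epsilon>) T"] \<open>\<epsilon> > 0\<close> S b by auto
      with Fa F[rule_format, of "x - a"] show False by (cases "x < a") auto
    next
      case G
      obtain x where x: "0 \<le> x" "x < min (b + \<epsilon>) T" "G x \<noteq> 0"
        using max_b[of "min (b + \<epsilon>) T"] \<open>\<epsilon> > 0\<close> S a by auto
      with Gb G[rule_format, of "x - b"] show False by (cases "x < b") auto
    qed
  qed
  with a b Fa Gb that show ?thesis by blast
qed

section \<open>Integrable functions\<close>

lemma AE_lebesgue_on_subinterval:
  assumes "AE x in lebesgue_on {c..d}. P x" "c \<le> a" "b \<le> d"
  shows "AE x in lebesgue_on {a..b::real}. P x"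
  using assms(1) by (subst (asm) AE_restrict_space_iff)
    (use assms(2,3) in \<open>auto simp: AE_restrict_space_iff elim!: eventually_mono\<close>)

lemma borel_measurable_lebesgue_on_borel:
  "(h::real \<Rightarrow> real) \<in> borel_measurable borel \<Longrightarrow> h \<in> borel_measurable (lebesgue_on S)"
  by (rule measurable_restrict_space1, rule measurable_completion) (simp add: measurable_lborel1)

lemma borel_representative:
  fixes f :: "real \<Rightarrow> real"
  assumes "f \<in> borel_measurable (lebesgue_on {a..b})"
  obtains fb where "fb \<in> borel_measurable borel" "AE x in lebesgue_on {a..b}. f x = fb x"
proof -
  have "(\<lambda>x. indicator {a..b} x *\<^sub>R f x) \<in> borel_measurable lebesgue"
    using assms by (subst (asm) borel_measurable_restrict_space_iff) auto
  from completion_ex_borel_measurable_real[OF this]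
  obtain fb where fb: "fb \<in> borel_measurable lborel" "AE x in lborel. indicator {a..b} x *\<^sub>R f x = fb x"
    by blast
  have "AE x in lebesgue. indicator {a..b} x *\<^sub>R f x = fb x" by (rule AE_completion[OF fb(2)])
  then have "AE x in lebesgue_on {a..b}. f x = fb x"
    by (subst AE_restrict_space_iff) (auto elim!: eventually_mono simp: indicator_def)
  with fb(1) that show ?thesis by (simp add: measurable_lborel1)
qed

lemma integrable_borel_representative:
  fixes f :: "real \<Rightarrow> real"
  assumes f: "integrable (lebesgue_on {a..b}) f"
  obtains fb where "fb \<in> borel_measurable borel" "integrable lborel fb"
    "AE x in lebesgue_on {a..b}. f x = fb x" "\<And>x. x \<notin> {a..b} \<Longrightarrow> fb x = 0"
proof -
  obtain g where g: "g \<in> borel_measurable borel" and ae: "AE x in lebesgue_on {a..b}. f x = g x"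
    using borel_representative[OF borel_measurable_integrable[OF f]] by blast
  define fb where "fb x = indicator {a..b} x * g x" for x
  have fb: "fb \<in> borel_measurable borel" unfolding fb_def using g by measurable
  have "integrable (lebesgue_on {a..b}) g"
    by (rule integrable_cong_AE_imp[OF f borel_measurable_lebesgue_on_borel[OF g] ae])
  then have "integrable lebesgue fb"
    unfolding fb_def by (subst (asm) integrable_restrict_space) auto
  with fb have "integrable lborel fb" by (subst (asm) integrable_completion) (auto simp: measurable_lborel1)
  moreover have "AE x in lebesgue_on {a..b}. f x = fb x"
    using ae AE_space[of "lebesgue_on {a..b}"] by eventually_elim (simp add: fb_def)
  ultimately show ?thesis using that fb by (auto simp: fb_def)
qed

lemma integral_lebesgue_on_mult_cong_AE:
  fixes f fb h :: "real \<Rightarrow> real"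
  assumes f: "f \<in> borel_measurable (lebesgue_on {c..d})" and fb: "fb \<in> borel_measurable borel"
    and ae: "AE x in lebesgue_on {c..d}. f x = fb x" and h: "continuous_on UNIV h"
    and ab: "c \<le> a" "b \<le> d"
  shows "integral\<^sup>L (lebesgue_on {a..b}) (\<lambda>v. f v * h v) = integral\<^sup>L (lebesgue_on {a..b}) (\<lambda>v. fb v * h v)"
proof (rule integral_cong_AE)
  show "(\<lambda>v. f v * h v) \<in> borel_measurable (lebesgue_on {a..b})"
    by (intro borel_measurable_times measurable_restrict_mono[OF f] borel_measurable_lebesgue_on_borel
        borel_measurable_continuous_onI h) (use ab in auto)
  show "(\<lambda>v. fb v * h v) \<in> borel_measurable (lebesgue_on {a..b})"
    by (intro borel_measurable_times borel_measurable_lebesgue_on_borel fb borel_measurable_continuous_onI h)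
  show "AE v in lebesgue_on {a..b}. f v * h v = fb v * h v"
    using AE_lebesgue_on_subinterval[OF ae ab] by eventually_elim simp
qed

text \<open>The measures with densities \<open>max 0 \<phi>\<close> and \<open>max 0 (- \<phi>)\<close> agree on all half-lines,
  hence everywhere.\<close>

lemma AE_zero_if_integral_atMost_zero:
  fixes \<phi> :: "real \<Rightarrow> real"
  assumes m: "\<phi> \<in> borel_measurable borel" and int: "integrable lborel \<phi>"
    and atMost: "\<And>x. (\<integral>y. indicator {..x} y * \<phi> y \<partial>lborel) = 0"
    and total: "(\<integral>y. \<phi> y \<partial>lborel) = 0"
  shows "AE x in lborel. \<phi> x = 0"
proof -
  define P where "P x = max 0 (\<phi> x)" for x
  define N where "N x = max 0 (- \<phi> x)" for x
  have mP[measurable]: "P \<in> borel_measurable borel" unfolding P_def using m by measurable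
  have mN[measurable]: "N \<in> borel_measurable borel" unfolding N_def using m by measurable
  have iP: "integrable lborel P" unfolding P_def by (intro integrable_max int integrable_zero)
  have iN: "integrable lborel N" unfolding N_def by (intro integrable_max int integrable_zero integrable_minus)
  have iI: "integrable lborel (\<lambda>y. indicator A y * h y)"
    if "A \<in> sets borel" "integrable lborel h" for A and h :: "real \<Rightarrow> real"
    using integrable_mult_indicator[OF _ that(2), of A] that(1) by simp
  have eq: "(\<integral>y. indicator {x<..} y * P y \<partial>lborel) = (\<integral>y. indicator {x<..} y * N y \<partial>lborel)" for x
  proof -
    have "(\<integral>y. indicator {x<..} y * P y \<partial>lborel) - (\<integral>y. indicator {x<..} y * N y \<partial>lborel)
        = (\<integral>y. \<phi> y - indicator {..x} y * \<phi> y \<partial>lborel)"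
      by (subst Bochner_Integration.integral_diff[symmetric, OF iI[OF _ iP] iI[OF _ iN]])
        (auto intro!: Bochner_Integration.integral_cong simp: P_def N_def indicator_def max_def)
    also have "\<dots> = 0"
      using atMost[of x] total by (subst Bochner_Integration.integral_diff[OF int iI[OF _ int]]) auto
    finally show ?thesis by simp
  qed
  have em: "emeasure (density lborel (\<lambda>x. ennreal (h x))) {x<..} = ennreal (\<integral>y. indicator {x<..} y * h y \<partial>lborel)"
    if "h \<in> borel_measurable borel" "integrable lborel h" "\<And>y. h y \<ge> 0" for h :: "real \<Rightarrow> real" and x
  proof -
    have "emeasure (density lborel (\<lambda>x. ennreal (h x))) {x<..} = (\<integral>\<^sup>+ y. ennreal (indicator {x<..} y * h y) \<partial>lborel)"
      using that by (subst emeasure_density) (auto intro!: nn_integral_cong simp: indicator_def)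
    also have "\<dots> = ennreal (\<integral>y. indicator {x<..} y * h y \<partial>lborel)"
      using that by (intro nn_integral_eq_integral iI) (auto simp: indicator_def)
    finally show ?thesis .
  qed
  have "density lborel (\<lambda>x. ennreal (P x)) = density lborel (\<lambda>x. ennreal (N x))"
  proof (rule measure_eqI_lessThan)
    fix x :: real
    show "emeasure (density lborel (\<lambda>x. ennreal (P x))) {x<..} < \<infinity>"
      using em[OF mP iP] by (simp add: P_def)
    show "emeasure (density lborel (\<lambda>x. ennreal (P x))) {x<..} = emeasure (density lborel (\<lambda>x. ennreal (N x))) {x<..}"
      using em[OF mP iP, of x] em[OF mN iN, of x] eq[of x] by (simp add: P_def N_def)
  qed simp_all
  then have "AE x in lborel. ennreal (P x) = ennreal (N x)"
    by (rule sigma_finite_measure.density_unique[OF sigma_finite_lborel, rotated 2]) auto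
  then show ?thesis
    by eventually_elim (auto simp: P_def N_def max_def split: if_splits)
qed

lemma AE_zero_if_indefinite_integral_zero:
  fixes f :: "real \<Rightarrow> real"
  assumes c: "0 \<le> c" and f: "integrable (lebesgue_on {0..c}) f"
    and F_open: "\<And>x. 0 \<le> x \<Longrightarrow> x < c \<Longrightarrow> integral\<^sup>L (lebesgue_on {0..x}) f = 0"
  shows "AE x in lebesgue_on {0..c}. f x = 0"
proof -
  have F: "integral\<^sup>L (lebesgue_on {0..x}) f = 0" if "x \<in> {0..c}" for x
    by (rule vanishing_closed_if_vanishing_open[OF indefinite_integral_continuous_real[OF f] _ F_open that])
      (simp add: integral_lebesgue_on_singleton[of 0, simplified])
  have mf: "f \<in> borel_measurable (lebesgue_on {0..c})" by (rule borel_measurable_integrable[OF f])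
  obtain fb where fb: "fb \<in> borel_measurable borel" "integrable lborel fb"
    and ae: "AE x in lebesgue_on {0..c}. f x = fb x" and outside: "\<And>x. x \<notin> {0..c} \<Longrightarrow> fb x = 0"
    using integrable_borel_representative[OF f] by blast
  have Fb: "(\<integral>y. indicator {0..x} y * fb y \<partial>lborel) = 0" if "x \<in> {0..c}" for x
    using F[OF that] integral_lebesgue_on_mult_cong_AE[OF mf fb(1) ae, where h="\<lambda>_. 1" and a=0 and b=x] that
    by (simp add: integral_lebesgue_on_Icc_lborel[OF fb(1)])
  have "AE x in lborel. fb x = 0"
  proof (rule AE_zero_if_integral_atMost_zero[OF fb])
    fix x :: real
    have "(\<integral>y. indicator {..x} y * fb y \<partial>lborel) = (\<integral>y. indicator {0..min x c} y * fb y \<partial>lborel)"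
      using outside by (intro Bochner_Integration.integral_cong refl) (auto simp: indicator_def)
    also have "\<dots> = 0"
      using Fb[of "min x c"] c by (cases "x < 0") (auto simp: min_def)
    finally show "(\<integral>y. indicator {..x} y * fb y \<partial>lborel) = 0" .
  next
    have "(\<integral>y. fb y \<partial>lborel) = (\<integral>y. indicator {0..c} y * fb y \<partial>lborel)"
      using outside by (intro Bochner_Integration.integral_cong refl) (auto simp: indicator_def)
    then show "(\<integral>y. fb y \<partial>lborel) = 0" using Fb[of c] c by simp
  qed
  then have "AE x in lebesgue_on {0..c}. fb x = 0"
    by (subst AE_restrict_space_iff) (auto dest!: AE_completion elim!: eventually_mono)
  with ae show ?thesis by eventually_elim simp
qed

lemma integrable_lborel_conv_kernel:
  fixes \<phi> G :: "real \<Rightarrow> real"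
  assumes \<phi>[measurable]: "\<phi> \<in> borel_measurable borel" and \<phi>_int: "integrable lborel \<phi>"
    and G[measurable]: "G \<in> borel_measurable borel" and G_bnd: "\<And>x. \<bar>G x\<bar> \<le> M"
  shows "integrable lborel (\<lambda>(u,t). indicator {(u,t). 0 \<le> t \<and> t \<le> u \<and> u \<le> s} (u,t) * (\<phi> (u - t) * G t))"
proof -
  have shift: "(\<integral>u. \<bar>\<phi> (u - t)\<bar> \<partial>lborel) = (\<integral>x. \<bar>\<phi> x\<bar> \<partial>lborel)"
    and shift_int: "integrable lborel (\<lambda>u. \<bar>\<phi> (u - t)\<bar>)" for t
    using lborel_integral_real_affine[of 1 "\<lambda>x. \<bar>\<phi> x\<bar>" "-t"]
      lborel_integrable_real_affine_iff[of 1 "\<lambda>x. \<bar>\<phi> x\<bar>" "-t"] \<phi>_int by simp_all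
  have "integrable (lborel \<Otimes>\<^sub>M lborel) (\<lambda>(t,u). indicator {0..s} t * \<bar>\<phi> (u - t)\<bar>)"
  proof (rule lborel_pair.Fubini_integrable)
    show "(\<lambda>(t,u). indicator {0..s} t * \<bar>\<phi> (u - t)\<bar>) \<in> borel_measurable (lborel \<Otimes>\<^sub>M lborel)"
      by measurable
    show "integrable lborel (\<lambda>t. \<integral>u. norm ((\<lambda>(t,u). indicator {0..s} t * \<bar>\<phi> (u - t)\<bar>) (t, u)) \<partial>lborel)"
      using borel_integrable_compact[of "{0..s}" "\<lambda>_. 1::real"] by (simp add: abs_mult shift)
    show "AE t in lborel. integrable lborel (\<lambda>u. (\<lambda>(t,u). indicator {0..s} t * \<bar>\<phi> (u - t)\<bar>) (t, u))"
      by (auto intro!: integrable_mult_right shift_int)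
  qed
  from lborel_pair.integrable_product_swap[OF this]
  have "integrable lborel (\<lambda>(u,t). M * (indicator {0..s} t * \<bar>\<phi> (u - t)\<bar>))"
    by (simp add: lborel_prod case_prod_unfold)
  then show ?thesis
  proof (rule Bochner_Integration.integrable_bound)
    have "closed {(u,t). 0 \<le> t \<and> t \<le> u \<and> u \<le> (s::real)}"
      by (auto intro!: closed_Collect_conj closed_Collect_le continuous_intros simp: case_prod_unfold)
    then show "(\<lambda>(u,t). indicator {(u,t). 0 \<le> t \<and> t \<le> u \<and> u \<le> s} (u,t) * (\<phi> (u - t) * G t))
        \<in> borel_measurable lborel"
      unfolding lborel_prod[symmetric] by measurable
    have "M \<ge> 0" using G_bnd[of 0] by simp
    then show "AE p in lborel. norm ((\<lambda>(u,t). indicator {(u,t). 0 \<le> t \<and> t \<le> u \<and> u \<le> s} (u,t) *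
        (\<phi> (u - t) * G t)) p) \<le> norm ((\<lambda>(u,t). M * (indicator {0..s} t * \<bar>\<phi> (u - t)\<bar>)) p)"
      using G_bnd by (intro AE_I2) (auto simp: indicator_def abs_mult mult_right_mono mult.commute)
  qed
qed

lemma conv_indefinite_integral:
  fixes f G :: "real \<Rightarrow> real"
  assumes f: "integrable (lebesgue_on {0..T}) f"
    and G: "continuous_on UNIV G" and G_bnd: "\<And>x. \<bar>G x\<bar> \<le> M"
    and s: "s \<in> {0..T}"
  shows "conv (\<lambda>x. integral\<^sup>L (lebesgue_on {0..x}) f) G s = integral\<^sup>L (lebesgue_on {0..s}) (conv f G)"
proof -
  have mf: "f \<in> borel_measurable (lebesgue_on {0..T})" by (rule borel_measurable_integrable[OF f])
  obtain fT where fT[measurable]: "fT \<in> borel_measurable borel" and fT_int: "integrable lborel fT"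
    and ae: "AE x in lebesgue_on {0..T}. f x = fT x"
    using integrable_borel_representative[OF f] by blast
  have G_meas[measurable]: "G \<in> borel_measurable borel" by (rule borel_measurable_continuous_onI[OF G])
  have conv_fT: "conv f G u = conv fT G u" if "u \<in> {0..s}" for u
    unfolding conv_def
    by (subst (1 2) integral_lebesgue_on_reflect, simp, rule integral_lebesgue_on_mult_cong_AE[OF mf fT ae])
      (use s that in \<open>auto intro!: continuous_on_compose_UNIV[OF G] continuous_intros\<close>)
  have indefinite_fT: "integral\<^sup>L (lebesgue_on {0..x}) f = integral\<^sup>L (lebesgue_on {0..x}) fT" if "x \<in> {0..s}" for x
    using integral_lebesgue_on_mult_cong_AE[OF mf fT ae, where h="\<lambda>_. 1" and a=0 and b=x] s that by auto
  have "integral\<^sup>L (lebesgue_on {0..s}) (conv f G) =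
      integral\<^sup>L (lebesgue_on {0..s}) (\<lambda>u. integral\<^sup>L (lebesgue_on {0..u}) (\<lambda>t. fT (u - t) * G t))"
    using conv_fT by (auto intro!: Bochner_Integration.integral_cong simp: conv_def)
  also have "\<dots> = integral\<^sup>L (lebesgue_on {0..s}) (\<lambda>t. integral\<^sup>L (lebesgue_on {t..s}) (\<lambda>u. fT (u - t) * G t))"
  proof (rule integral_triangle_swap[OF _ integrable_lborel_conv_kernel[OF fT fT_int G_meas G_bnd]])
    have "(\<lambda>p::real \<times> real. fst p - snd p) \<in> borel_measurable borel"
      by (intro borel_measurable_continuous_onI continuous_intros)
    moreover have "snd \<in> borel_measurable (borel :: (real \<times> real) measure)"
      by (intro borel_measurable_continuous_onI continuous_intros)
    ultimately show "(\<lambda>(u, t). fT (u - t) * G t) \<in> borel_measurable borel"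
      unfolding case_prod_unfold by (intro borel_measurable_times measurable_compose[OF _ fT]
          measurable_compose[OF _ G_meas])
  qed
  also have "\<dots> = integral\<^sup>L (lebesgue_on {0..s}) (\<lambda>t. integral\<^sup>L (lebesgue_on {0..s-t}) fT * G t)"
  proof (intro Bochner_Integration.integral_cong refl)
    fix t
    show "integral\<^sup>L (lebesgue_on {t..s}) (\<lambda>u. fT (u - t) * G t) = integral\<^sup>L (lebesgue_on {0..s-t}) fT * G t"
      by (subst integral_lebesgue_on_shift[where d=t]) simp
  qed
  also have "\<dots> = conv (\<lambda>x. integral\<^sup>L (lebesgue_on {0..x}) f) G s"
    unfolding conv_def using indefinite_fT by (auto intro!: Bochner_Integration.integral_cong)
  finally show ?thesis ..
qed

lemma continuous_on_clamp:
  assumes "continuous_on {0..T} (F :: real \<Rightarrow> real)" "0 \<le> T"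
  shows "continuous_on UNIV (\<lambda>x. F (max 0 (min T x)))"
  by (rule continuous_on_compose2[OF assms(1)]) (use assms(2) in \<open>auto intro!: continuous_intros\<close>)

lemma titchmarsh_integrable:
  fixes f g :: "real \<Rightarrow> real"
  assumes T: "T > 0" and f: "integrable (lebesgue_on {0..T}) f" and g: "integrable (lebesgue_on {0..T}) g"
    and fg: "AE x in lebesgue_on {0..T}. conv f (\<lambda>t. integral\<^sup>L (lebesgue_on {0..t}) g) x = 0"
  obtains a b where "a \<in> {0..T}" "b \<in> {0..T}" "T \<le> a + b"
    "AE x in lebesgue_on {0..a}. f x = 0" "AE x in lebesgue_on {0..b}. g x = 0"
proof -
  define Fr where "Fr x = integral\<^sup>L (lebesgue_on {0..x}) f" for x
  define Gr where "Gr x = integral\<^sup>L (lebesgue_on {0..x}) g" for x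
  define Fh where "Fh x = Fr (max 0 (min T x))" for x
  define Gh where "Gh x = Gr (max 0 (min T x))" for x
  have cF: "continuous_on {0..T} Fr" unfolding Fr_def by (rule indefinite_integral_continuous_real[OF f])
  have cG: "continuous_on {0..T} Gr" unfolding Gr_def by (rule indefinite_integral_continuous_real[OF g])
  have cFh: "continuous_on UNIV Fh" and cGh: "continuous_on UNIV Gh"
    unfolding Fh_def Gh_def using continuous_on_clamp[OF cF] continuous_on_clamp[OF cG] T by auto
  obtain M where M: "\<And>y. y \<in> Gr ` {0..T} \<Longrightarrow> norm y \<le> M"
    using compact_imp_bounded[OF compact_continuous_image[OF cG compact_Icc]] bounded_iff by metis
  have "conv Fh Gh s = 0" if s: "s \<in> {0..T}" for s
  proof -
    have "conv Fh Gh s = conv Fr Gh s" by (rule conv_cong) (use s in \<open>auto simp: Fh_def\<close>)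
    also have "\<dots> = integral\<^sup>L (lebesgue_on {0..s}) (conv f Gh)"
      unfolding Fr_def using M T by (intro conv_indefinite_integral[OF f cGh _ s, where M=M]) (auto simp: Gh_def)
    also have "\<dots> = 0"
    proof (rule integral_eq_zero_AE)
      have "AE u in lebesgue_on {0..s}. conv f Gr u = 0"
        by (rule AE_lebesgue_on_subinterval[OF fg[folded Gr_def]]) (use s in auto)
      then show "AE u in lebesgue_on {0..s}. conv f Gh u = 0"
        using AE_space[of "lebesgue_on {0..s}"]
      proof eventually_elim
        case (elim u)
        then have "conv f Gh u = conv f Gr u" by (intro conv_cong) (use s in \<open>auto simp: Gh_def\<close>)
        with elim show ?case by simp
      qed
    qed
    finally show ?thesis .
  qed
  then obtain a b where ab: "0 \<le> a" "0 \<le> b" "T \<le> a + b"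
    and Fa: "\<And>x. 0 \<le> x \<Longrightarrow> x < a \<Longrightarrow> Fh x = 0" and Gb: "\<And>x. 0 \<le> x \<Longrightarrow> x < b \<Longrightarrow> Gh x = 0"
    using titchmarsh_continuous[OF cFh cGh T] by metis
  have Fr0: "Fr x = 0" if "0 \<le> x" "x < min a T" for x
    using Fa[of x] that by (simp add: Fh_def)
  have Gr0: "Gr x = 0" if "0 \<le> x" "x < min b T" for x
    using Gb[of x] that by (simp add: Gh_def)
  have "AE x in lebesgue_on {0..min a T}. f x = 0"
    by (intro AE_zero_if_indefinite_integral_zero integrable_subinterval[OF f])
      (use ab T Fr0 in \<open>auto simp: Fr_def\<close>)
  moreover have "AE x in lebesgue_on {0..min b T}. g x = 0"
    by (intro AE_zero_if_indefinite_integral_zero integrable_subinterval[OF g])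
      (use ab T Gr0 in \<open>auto simp: Gr_def\<close>)
  moreover have "T \<le> min a T + min b T" using ab T by auto
  ultimately show ?thesis using that[of "min a T" "min b T"] ab T by auto
qed

lemma AE_lebesgue_on_extend:
  assumes "AE v in lebesgue_on {0..a}. P v"
  shows "AE v in lebesgue_on {0..x::real}. v \<in> {0..a} \<longrightarrow> P v"
proof -
  have "AE v in lebesgue. v \<in> {0..a} \<longrightarrow> P v"
    using assms by (subst (asm) AE_restrict_space_iff) auto
  then show ?thesis by (subst AE_restrict_space_iff) (auto elim: eventually_mono)
qed

lemma AE_lebesgue_on_reflect:
  assumes "AE v in lebesgue_on {0..x}. P v"
  shows "AE t in lebesgue_on {0..x::real}. P (x - t)"
proof -
  have "AE v in lborel. v \<in> {0..x} \<longrightarrow> P v"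
    using assms by (subst (asm) AE_restrict_space_iff) (auto simp: AE_completion_iff)
  then obtain N where N': "{v \<in> space lborel. \<not> (v \<in> {0..x} \<longrightarrow> P v)} \<subseteq> N"
    "emeasure lborel N = 0" "N \<in> sets lborel"
    by (rule AE_E)
  then have N: "N \<in> null_sets lborel" "\<And>v. v \<in> {0..x} \<Longrightarrow> \<not> P v \<Longrightarrow> v \<in> N"
    by (auto intro: null_setsI)
  have "AE v in lborel. v \<notin> N" using N(1) by (rule AE_not_in)
  then have "AE t in lborel. x + (-1) * t \<notin> N"
    by (rule AE_borel_affine[rotated 2]) (use N(1) in auto)
  then have "AE t in lborel. t \<in> {0..x} \<longrightarrow> P (x - t)"
  proof eventually_elim
    case (elim t)
    show ?case
    proof
      assume "t \<in> {0..x}"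
      then have "x - t \<in> {0..x}" by auto
      with elim N(2)[of "x - t"] show "P (x - t)" by auto
    qed
  qed
  then have "AE t in lebesgue. t \<in> {0..x} \<longrightarrow> P (x - t)" by (rule AE_completion)
  then show ?thesis by (subst AE_restrict_space_iff) auto
qed

section \<open>The operators\<close>

lemma Vop_eq_0_if_vanishing:
  assumes f: "AE t in lebesgue_on {0..a}. f t = 0" and \<rho>: "AE t in lebesgue_on {0..b}. \<rho> t = 0"
    and x: "x \<le> a + b"
  shows "Vop f \<rho> x = 0"
  unfolding Vop_def
proof (rule integral_eq_zero_AE)
  show "AE t in lebesgue_on {0..x}. complex_of_real (f (x - t)) * \<rho> t = 0"
    using AE_lebesgue_on_reflect[OF AE_lebesgue_on_extend[OF f]] AE_lebesgue_on_extend[OF \<rho>]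
      AE_space[of "lebesgue_on {0..x}"]
  proof eventually_elim
    case (elim t)
    with x show ?case by (cases "t \<le> b") auto
  qed
qed

lemma Vop_of_real: "Vop f (\<lambda>t. complex_of_real (\<phi> t)) x = complex_of_real (conv f \<phi> x)"
  unfolding Vop_def conv_def by (simp flip: of_real_mult)

lemma Vop_const_1: "Vop g (\<lambda>_. 1) t = complex_of_real (integral\<^sup>L (lebesgue_on {0..t}) g)"
  using Vop_of_real[of g "\<lambda>_. 1" t]
  by (simp add: conv_def integral_lebesgue_on_reflect[of _ g])

lemma L2_const_1: "L2 (\<lambda>_. 1)"
  unfolding L2_def by (auto intro!: continuous_imp_integrable_real)

lemma AE_zero_on_Sup:
  fixes f :: "real \<Rightarrow> real"
  assumes c: "0 \<le> c"
  defines "A \<equiv> {a. 0 \<le> a \<and> a \<le> c \<and> (AE x in lebesgue_on {0..a}. f x = 0)}"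
  shows "AE x in lebesgue_on {0..Sup A}. f x = 0" "0 \<le> Sup A" "Sup A \<le> c" "\<And>a. a \<in> A \<Longrightarrow> a \<le> Sup A"
proof -
  have "AE x in lebesgue_on {0..0}. f x = 0"
    using AE_lebesgue_on_neq[where a=0 and b=0 and u=0] by eventually_elim auto
  then have A0: "0 \<in> A" using c by (simp add: A_def)
  have bdd: "bdd_above A" by (rule bdd_aboveI[where M=c]) (auto simp: A_def)
  show "0 \<le> Sup A" by (rule cSup_upper[OF A0 bdd])
  show "Sup A \<le> c" by (rule cSup_least) (use A0 in \<open>auto simp: A_def\<close>)
  show "\<And>a. a \<in> A \<Longrightarrow> a \<le> Sup A" by (rule cSup_upper[OF _ bdd])
  have "\<exists>a\<in>A. Sup A - inverse (real (Suc n)) < a" for n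
    by (subst less_cSup_iff[symmetric, OF _ bdd]) (use A0 in auto)
  then obtain a where a: "\<And>n. a n \<in> A" "\<And>n. Sup A - inverse (real (Suc n)) < a n" by metis
  have "AE x in lebesgue. x \<in> {0..a n} \<longrightarrow> f x = 0" for n
    using a(1)[of n] by (simp add: A_def AE_restrict_space_iff)
  then have "AE x in lebesgue. \<forall>n. x \<in> {0..a n} \<longrightarrow> f x = 0" by (subst AE_all_countable) auto
  moreover have "AE x in lebesgue. x \<noteq> Sup A" by (rule AE_completion[OF AE_lborel_singleton])
  ultimately have "AE x in lebesgue. x \<in> {0..Sup A} \<longrightarrow> f x = 0"
  proof eventually_elim
    case (elim x)
    show ?case
    proof
      assume x: "x \<in> {0..Sup A}"
      with elim obtain n where "inverse (real (Suc n)) < Sup A - x"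
        using reals_Archimedean[of "Sup A - x"] by auto
      with a(2)[of n] have "x \<le> a n" by linarith
      with elim x show "f x = 0" by auto
    qed
  qed
  then show "AE x in lebesgue_on {0..Sup A}. f x = 0" by (subst AE_restrict_space_iff) auto
qed

lemma initial_vanishing_if_Vop_Vop_zero:
  fixes f g :: "real \<Rightarrow> real"
  assumes f: "\<forall>x\<in>{0..<1}. integrable (lebesgue_on {0..x}) f"
    and g: "\<forall>x\<in>{0..<1}. integrable (lebesgue_on {0..x}) g"
    and zero: "op_zero (\<lambda>\<rho>. Vop f (Vop g \<rho>))"
  shows "\<exists>\<alpha>\<in>{0..1}. (AE x in lebesgue_on {0..\<alpha>}. f x = 0) \<and> (AE x in lebesgue_on {0..1-\<alpha>}. g x = 0)"
proof -
  have "AE x in lebesgue_on {0..1}. Vop f (Vop g (\<lambda>_. 1)) x = 0"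
    using zero L2_const_1 unfolding op_zero_def by blast
  moreover have "Vop g (\<lambda>_. 1) = (\<lambda>t. complex_of_real (integral\<^sup>L (lebesgue_on {0..t}) g))"
    by (rule ext) (rule Vop_const_1)
  ultimately have fG: "AE x in lebesgue_on {0..1}. conv f (\<lambda>t. integral\<^sup>L (lebesgue_on {0..t}) g) x = 0"
    by (simp add: Vop_of_real)
  define Af where "Af = {a. 0 \<le> a \<and> a \<le> 1 \<and> (AE x in lebesgue_on {0..a}. f x = 0)}"
  define Ag where "Ag = {a. 0 \<le> a \<and> a \<le> 1 \<and> (AE x in lebesgue_on {0..a}. g x = 0)}"
  note Sup_f = AE_zero_on_Sup[where f=f, OF zero_le_one, folded Af_def]
    and Sup_g = AE_zero_on_Sup[where f=g, OF zero_le_one, folded Ag_def]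
  have "1 \<le> Sup Af + Sup Ag"
  proof (rule ccontr)
    assume "\<not> 1 \<le> Sup Af + Sup Ag"
    define T where "T = (Sup Af + Sup Ag + 1) / 2"
    have T: "0 < T" "T < 1" using Sup_f(2) Sup_g(2) \<open>\<not> 1 \<le> Sup Af + Sup Ag\<close> by (simp_all add: T_def)
    obtain a b where "a \<in> {0..T}" "b \<in> {0..T}" "T \<le> a + b"
      "AE x in lebesgue_on {0..a}. f x = 0" "AE x in lebesgue_on {0..b}. g x = 0"
      by (rule titchmarsh_integrable[OF T(1)])
        (use f g T AE_lebesgue_on_subinterval[OF fG, of 0 T] in auto)
    with T Sup_f(4)[of a] Sup_g(4)[of b] have "T \<le> Sup Af + Sup Ag" by (auto simp: Af_def Ag_def)
    with \<open>\<not> 1 \<le> Sup Af + Sup Ag\<close> show False by (simp add: T_def)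
  qed
  then have "AE x in lebesgue_on {0..1 - Sup Af}. g x = 0"
    by (intro AE_lebesgue_on_subinterval[OF Sup_g(1)]) auto
  with Sup_f show ?thesis by auto
qed

lemma op_zero_if_initial_vanishing:
  fixes f g :: "real \<Rightarrow> real"
  assumes f: "AE x in lebesgue_on {0..\<alpha>}. f x = 0" and g: "AE x in lebesgue_on {0..1-\<alpha>}. g x = 0"
  shows "op_zero (\<lambda>\<rho>. Vop f (Vop g \<rho>))" "op_zero (Vop (conv f g))"
proof -
  have null: "AE t in lebesgue_on {0..0}. \<phi> t = 0" for \<phi> :: "real \<Rightarrow> 'a::zero"
    using AE_lebesgue_on_neq[where a=0 and b=0 and u=0] by eventually_elim auto
  have "Vop g \<rho> t = 0" if "t \<in> {0..1-\<alpha>}" for \<rho> t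
    by (rule Vop_eq_0_if_vanishing[OF g null]) (use that in auto)
  then have "Vop f (Vop g \<rho>) x = 0" if "x \<le> 1" for \<rho> x
    by (intro Vop_eq_0_if_vanishing[OF f, where b="1-\<alpha>"]) (use that in \<open>auto intro!: AE_I2\<close>)
  then show "op_zero (\<lambda>\<rho>. Vop f (Vop g \<rho>))"
    unfolding op_zero_def by (auto intro!: AE_I2)
  have "conv f g x = 0" if "x \<le> 1" for x
    using Vop_eq_0_if_vanishing[OF f, of "\<lambda>t. complex_of_real (g t)" "1-\<alpha>" x] g that
    by (simp add: Vop_of_real)
  then have "Vop (conv f g) \<rho> x = 0" if "x \<le> 1" for \<rho> x
    by (intro Vop_eq_0_if_vanishing[OF _ null, where a=1]) (use that in \<open>auto intro!: AE_I2\<close>)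
  then show "op_zero (Vop (conv f g))"
    unfolding op_zero_def by (auto intro!: AE_I2)
qed

theorem mainTheorem20:
  fixes f g :: "real \<Rightarrow> real"
  assumes "f \<in> borel_measurable (lebesgue_on {0..1})"
    and "g \<in> borel_measurable (lebesgue_on {0..1})"
    and "\<forall>x\<in>{0..<1}. integrable (lebesgue_on {0..x}) f"
    and "\<forall>x\<in>{0..<1}. integrable (lebesgue_on {0..x}) g"
    and "in_AV f" and "in_AV g"
  shows "(op_zero (\<lambda>\<rho>. Vop f (Vop g \<rho>)) \<and> op_zero (Vop (conv f g))) \<longleftrightarrow>
    (\<exists>\<alpha>\<in>{0..1}. (AE x in lebesgue_on {0..\<alpha>}. f x = 0) \<and>
                 (AE x in lebesgue_on {0..1-\<alpha>}. g x = 0))"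
  using initial_vanishing_if_Vop_Vop_zero[OF assms(3,4)] op_zero_if_initial_vanishing by blast

end
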